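(* Let $X,U$ be Banach spaces and let $A$ generate a $C_0$-semigroup $T$ on $X$. If $B\in\mathcal{L}(U,X_{-1})$ is $E_\Phi$-admissible for some Young function $\Phi$, then $B$ is $L^\infty$-admissible, and for every $u\in L^\infty_{loc}(0,\infty;U)$ and every $x_0\in X$ the mild solution $x(t)=T_{-1}(t)x_0+\int_0^tT_{-1}(t-s)Bu(s)\,ds$ takes values in $X$ and $x:[0,\infty)\to X$ is continuous.
   Context: $X_{-1}$ is the completion of $X$ w.r.t. $\|(\beta-A)^{-1}\cdot\|$ for some $\beta\in\rho(A)$; $T_{-1}$ is the extension of $T$ to $X_{-1}$. A Young function is a continuous, convex, increasing $\Phi:[0,\infty)\to[0,\infty)$ with $\Phi(x)/x\to0$ as $x\to0$ and $\Phi(x)/x\to\infty$ as $x\to\infty$. $E_\Phi(0,t;U)$ is the closure of the boundedly supported $L^\infty(0,t;U)$ functions in the Orlicz space $L_\Phi(0,t;U)$ with norm $\|u\|=\inf\{k>0:\int_0^t\Phi(\|u(s)\|/k)\,ds\le1\}$. For $Z\in\{E_\Phi,L^\infty\}$, $B$ is $Z$-admissible if for every $t>0$ the map $u\mapsto\int_0^tT_{-1}(s)Bu(s)\,ds$ sends $Z(0,t;U)$ into $X$. *)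

theory Defs
  imports "HOL-Analysis.Analysis"
begin

definition c0_semigroup :: "(real \<Rightarrow> 'x::banach \<Rightarrow>\<^sub>L 'x) \<Rightarrow> bool" where
  "c0_semigroup T \<longleftrightarrow>
     T 0 = id_blinfun \<and>
     (\<forall>s t. 0 \<le> s \<longrightarrow> 0 \<le> t \<longrightarrow> T (s + t) = T s o\<^sub>L T t) \<and>
     (\<forall>x. continuous_on {0..} (\<lambda>t. blinfun_apply (T t) x))"

definition is_generator ::
  "(real \<Rightarrow> 'x::banach \<Rightarrow>\<^sub>L 'x) \<Rightarrow> 'x set \<Rightarrow> ('x \<Rightarrow> 'x) \<Rightarrow> bool" where
  "is_generator T D A \<longleftrightarrow>
     D = {x. \<exists>y. ((\<lambda>h. (blinfun_apply (T h) x - x) /\<^sub>R h) \<longlongrightarrow> y) (at_right 0)} \<and>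
     (\<forall>x\<in>D. ((\<lambda>h. (blinfun_apply (T h) x - x) /\<^sub>R h) \<longlongrightarrow> A x) (at_right 0))"

definition is_resolvent ::
  "'x set \<Rightarrow> ('x::banach \<Rightarrow> 'x) \<Rightarrow> real \<Rightarrow> ('x \<Rightarrow>\<^sub>L 'x) \<Rightarrow> bool" where
  "is_resolvent D A \<beta> R \<longleftrightarrow>
     (\<forall>y. blinfun_apply R y \<in> D \<and> \<beta> *\<^sub>R blinfun_apply R y - A (blinfun_apply R y) = y) \<and>
     (\<forall>x\<in>D. blinfun_apply R (\<beta> *\<^sub>R x - A x) = x)"

text \<open>j : X \<rightarrow> Y realises Y as the completion of X w.r.t. the norm x \<mapsto> norm (R x)
  (unique up to isometric isomorphism): j is linear, isometric for that norm, with dense range.\<close>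
definition is_completion_wrt :: "('x::banach \<Rightarrow>\<^sub>L 'x) \<Rightarrow> ('x \<Rightarrow> 'y::banach) \<Rightarrow> bool" where
  "is_completion_wrt R j \<longleftrightarrow>
     linear j \<and> (\<forall>x. norm (j x) = norm (blinfun_apply R x)) \<and> closure (range j) = UNIV"

definition extends_semigroup ::
  "(real \<Rightarrow> 'x::banach \<Rightarrow>\<^sub>L 'x) \<Rightarrow> ('x \<Rightarrow> 'y::banach) \<Rightarrow> (real \<Rightarrow> 'y \<Rightarrow>\<^sub>L 'y) \<Rightarrow> bool" where
  "extends_semigroup T j T1 \<longleftrightarrow>
     (\<forall>t\<ge>0. \<forall>x. blinfun_apply (T1 t) (j x) = j (blinfun_apply (T t) x))"

definition strongly_measurable_on :: "real set \<Rightarrow> (real \<Rightarrow> 'a::real_normed_vector) \<Rightarrow> bool" where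
  "strongly_measurable_on S u \<longleftrightarrow>
     (\<exists>f :: nat \<Rightarrow> real \<Rightarrow> 'a.
        (\<forall>n. finite (f n ` S) \<and> (\<forall>v. {s\<in>S. f n s = v} \<in> sets lebesgue)) \<and>
        (AE s in lebesgue_on S. (\<lambda>n. f n s) \<longlonglongrightarrow> u s))"

definition Linf_on :: "real \<Rightarrow> (real \<Rightarrow> 'a::real_normed_vector) \<Rightarrow> bool" where
  "Linf_on t u \<longleftrightarrow> strongly_measurable_on {0..t} u \<and>
     (\<exists>C. AE s in lebesgue_on {0..t}. norm (u s) \<le> C)"

definition young_function :: "(real \<Rightarrow> real) \<Rightarrow> bool" where
  "young_function \<Phi> \<longleftrightarrow>
     (\<forall>x\<ge>0. \<Phi> x \<ge> 0) \<and> continuous_on {0..} \<Phi> \<and> convex_on {0..} \<Phi> \<and> mono_on {0..} \<Phi> \<and>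
     ((\<lambda>x. \<Phi> x / x) \<longlongrightarrow> 0) (at_right 0) \<and>
     filterlim (\<lambda>x. \<Phi> x / x) at_top at_top"

definition luxemburg_set :: "(real \<Rightarrow> real) \<Rightarrow> real \<Rightarrow> (real \<Rightarrow> 'a::real_normed_vector) \<Rightarrow> real set" where
  "luxemburg_set \<Phi> t u =
     {k. 0 < k \<and> (\<integral>\<^sup>+ s. ennreal (\<Phi> (norm (u s) / k)) \<partial>(lebesgue_on {0..t})) \<le> 1}"

definition luxemburg_norm :: "(real \<Rightarrow> real) \<Rightarrow> real \<Rightarrow> (real \<Rightarrow> 'a::real_normed_vector) \<Rightarrow> real" where
  "luxemburg_norm \<Phi> t u = Inf (luxemburg_set \<Phi> t u)"

definition LPhi_on :: "(real \<Rightarrow> real) \<Rightarrow> real \<Rightarrow> (real \<Rightarrow> 'a::real_normed_vector) \<Rightarrow> bool" where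
  "LPhi_on \<Phi> t u \<longleftrightarrow> strongly_measurable_on {0..t} u \<and> luxemburg_set \<Phi> t u \<noteq> {}"

definition EPhi_on :: "(real \<Rightarrow> real) \<Rightarrow> real \<Rightarrow> (real \<Rightarrow> 'a::real_normed_vector) \<Rightarrow> bool" where
  "EPhi_on \<Phi> t u \<longleftrightarrow> LPhi_on \<Phi> t u \<and>
     (\<forall>\<epsilon>>0. \<exists>v. Linf_on t v \<and> LPhi_on \<Phi> t (\<lambda>s. u s - v s) \<and>
                 luxemburg_norm \<Phi> t (\<lambda>s. u s - v s) < \<epsilon>)"

text \<open>Z t u means u \<in> Z(0,t;U). B is Z-admissible iff for all t > 0 and u \<in> Z(0,t;U),
  the integral of T1(s) B u(s) over [0,t] (computed in Y) lies in j(X).\<close>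
definition admissible ::
  "(real \<Rightarrow> (real \<Rightarrow> 'u::banach) \<Rightarrow> bool) \<Rightarrow> (real \<Rightarrow> 'y::banach \<Rightarrow>\<^sub>L 'y) \<Rightarrow> ('u \<Rightarrow>\<^sub>L 'y)
     \<Rightarrow> ('x::banach \<Rightarrow> 'y) \<Rightarrow> bool" where
  "admissible Z T1 B j \<longleftrightarrow>
     (\<forall>t>0. \<forall>u. Z t u \<longrightarrow>
        (\<exists>x. ((\<lambda>s. blinfun_apply (T1 s) (blinfun_apply B (u s))) has_integral j x) {0..t}))"

end

theory Submission
  imports Defs
begin

text \<open>Bounded inputs lie in \<open>E\<^sub>\<Phi>\<close> on bounded intervals, which gives \<open>L\<^sup>\<infinity>\<close>-admissibility.
  Since \<open>\<integral>\<^sub>0\<^sup>t = \<integral>\<^sub>p\<^sup>t + T(t - p) \<integral>\<^sub>0\<^sup>p\<close>, continuity of the mild solution reduces to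
  \<open>\<integral>\<^sub>p\<^sup>t T\<^sub>-\<^sub>1(t - s) B u(s) ds \<rightarrow> 0\<close> in \<open>X\<close> as \<open>t - p \<rightarrow> 0\<close>, uniformly on bounded time intervals.
  If this failed, there would be arbitrarily short pieces of the input whose contributions
  have norm \<open>> \<epsilon>\<close>.  Shifting them by times \<open>\<theta>\<^sub>n\<close> so small that \<open>T(\<theta>\<^sub>n)\<close> barely moves their
  contributions, into disjoint intervals of \<open>[0, 1]\<close>, and gluing them with weights \<open>n c\<^sub>n\<close>,
  \<open>c \<in> \<ell>\<^sup>\<infinity>\<close>, gives inputs that stay in \<open>E\<^sub>\<Phi>\<close> because the pieces are very short.  Admissibility
  turns this into a linear map \<open>\<ell>\<^sup>\<infinity> \<rightarrow> X\<close> whose composition with the continuous injection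
  \<open>X \<rightarrow> X\<^sub>-\<^sub>1\<close> is bounded, so by the closed graph theorem it is bounded itself.  But the
  \<open>n\<close>-th unit sequence is mapped to a vector of norm \<open>\<ge> n \<epsilon> / 2\<close>.\<close>

subsection \<open>Young functions and Orlicz classes\<close>

lemma young_function_nonneg: "young_function \<Phi> \<Longrightarrow> 0 \<le> x \<Longrightarrow> 0 \<le> \<Phi> x"
  by (simp add: young_function_def)

lemma young_function_mono: "young_function \<Phi> \<Longrightarrow> 0 \<le> x \<Longrightarrow> x \<le> y \<Longrightarrow> \<Phi> x \<le> \<Phi> y"
  unfolding young_function_def by (intro mono_onD[of "{0..}" \<Phi>]) auto

lemma young_function_zero:
  assumes "young_function \<Phi>" shows "\<Phi> 0 = 0"
proof -
  have "continuous_on {0..} \<Phi>" and quot: "((\<lambda>x. \<Phi> x / x) \<longlongrightarrow> 0) (at_right 0)"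
    using assms by (auto simp: young_function_def)
  then have "(\<Phi> \<longlongrightarrow> \<Phi> 0) (at_right 0)"
    by (auto simp: continuous_on_def intro: tendsto_within_subset)
  moreover have "(\<Phi> \<longlongrightarrow> 0) (at_right 0)"
  proof (rule Lim_transform_eventually)
    show "((\<lambda>x. x * (\<Phi> x / x)) \<longlongrightarrow> 0) (at_right (0::real))"
      using tendsto_mult[OF tendsto_ident_at quot] by simp
    show "\<forall>\<^sub>F x in at_right 0. x * (\<Phi> x / x) = \<Phi> x"
      using eventually_at_right_less[of "0::real"] by (rule eventually_mono) simp
  qed
  ultimately show ?thesis by (rule tendsto_unique[rotated 1]) simp
qed

lemma young_function_small_value:
  assumes "young_function \<Phi>" "t > 0"
  obtains y where "0 < y" "y \<le> 1" "\<Phi> y \<le> 1 / t"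
proof -
  have "((\<lambda>x. \<Phi> x / x) \<longlongrightarrow> 0) (at_right 0)"
    using assms by (auto simp: young_function_def)
  then have "\<forall>\<^sub>F x in at_right 0. \<Phi> x / x < 1 / t"
    using assms(2) by (intro order_tendstoD) auto
  then obtain b where b: "b > 0" "\<And>x. 0 < x \<Longrightarrow> x < b \<Longrightarrow> \<Phi> x / x < 1 / t"
    by (auto simp: eventually_at_right_field)
  define y where "y = min (b/2) 1"
  have y: "0 < y" "y \<le> 1" "y < b" using b by (auto simp: y_def)
  then have "\<Phi> y < y / t" using b by (simp add: field_simps)
  also have "\<dots> \<le> 1 / t" using y assms by (simp add: divide_right_mono)
  finally show ?thesis using that y by auto
qed

lemma luxemburg_norm_le: "\<kappa> \<in> luxemburg_set \<Phi> t f \<Longrightarrow> luxemburg_norm \<Phi> t f \<le> \<kappa>"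
  unfolding luxemburg_norm_def
  by (rule cInf_lower) (auto intro!: bdd_belowI[of _ 0] simp: luxemburg_set_def)

lemma luxemburg_set_nonempty_if_bounded:
  assumes \<Phi>: "young_function \<Phi>" and t: "t > 0"
    and C: "AE s in lebesgue_on {0..t}. norm (u s) \<le> C"
  shows "luxemburg_set \<Phi> t u \<noteq> {}"
proof -
  obtain y where y: "0 < y" "y \<le> 1" "\<Phi> y \<le> 1 / t"
    using young_function_small_value[OF \<Phi> t] by blast
  define k where "k = max C 1 / y"
  have k: "k > 0" using y by (simp add: k_def)
  have "AE s in lebesgue_on {0..t}. ennreal (\<Phi> (norm (u s) / k)) \<le> ennreal (\<Phi> y)"
    using C
  proof (rule eventually_mono)
    fix s assume "norm (u s) \<le> C"
    then have "norm (u s) / k \<le> y"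
      using k y by (auto simp: k_def field_simps intro: order_trans[OF _ max.cobounded1])
    then show "ennreal (\<Phi> (norm (u s) / k)) \<le> ennreal (\<Phi> y)"
      using k by (intro ennreal_leI young_function_mono[OF \<Phi>]) auto
  qed
  then have "(\<integral>\<^sup>+ s. ennreal (\<Phi> (norm (u s) / k)) \<partial>lebesgue_on {0..t})
      \<le> (\<integral>\<^sup>+ s. ennreal (\<Phi> y) \<partial>lebesgue_on {0..t})"
    by (rule nn_integral_mono_AE)
  also have "\<dots> = ennreal (\<Phi> y * t)"
    using t y young_function_nonneg[OF \<Phi>, of y] by (simp add: emeasure_restrict_space ennreal_mult)
  also have "\<dots> \<le> 1"
    using y t by (simp add: field_simps)
  finally show ?thesis using k unfolding luxemburg_set_def by blast
qed

lemma strongly_measurable_on_zero: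
  "S \<in> sets lebesgue \<Longrightarrow> strongly_measurable_on S (\<lambda>s. 0)"
  unfolding strongly_measurable_on_def
  by (rule exI[of _ "\<lambda>n s. 0"]) (auto simp: image_constant_conv)

lemma Linf_on_imp_EPhi_on:
  assumes \<Phi>: "young_function \<Phi>" and t: "t > 0" and u: "Linf_on t u"
  shows "EPhi_on \<Phi> t u"
  unfolding EPhi_on_def
proof (intro conjI allI impI)
  show "LPhi_on \<Phi> t u"
    using u luxemburg_set_nonempty_if_bounded[OF \<Phi> t] by (auto simp: Linf_on_def LPhi_on_def)
  have zero: "LPhi_on \<Phi> t (\<lambda>s. u s - u s)"
    using luxemburg_set_nonempty_if_bounded[OF \<Phi> t, where u="\<lambda>s. 0" and C=0] strongly_measurable_on_zero[of "{0..t}"]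
    by (simp add: LPhi_on_def)
  fix \<epsilon> :: real assume "\<epsilon> > 0"
  then have "\<epsilon>/2 \<in> luxemburg_set \<Phi> t (\<lambda>s. u s - u s)"
    by (simp add: luxemburg_set_def young_function_zero[OF \<Phi>])
  then have "luxemburg_norm \<Phi> t (\<lambda>s. u s - u s) < \<epsilon>"
    using \<open>\<epsilon> > 0\<close> luxemburg_norm_le by fastforce
  then show "\<exists>v. Linf_on t v \<and> LPhi_on \<Phi> t (\<lambda>s. u s - v s) \<and> luxemburg_norm \<Phi> t (\<lambda>s. u s - v s) < \<epsilon>"
    using u zero by blast
qed

lemma admissible_mono:
  assumes "\<And>t u. t > 0 \<Longrightarrow> Z t u \<Longrightarrow> Z' t u" and "admissible Z' T1 B j"
  shows "admissible Z T1 B j"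
  using assms unfolding admissible_def by blast

subsection \<open>Consequences of the Baire category theorem\<close>

lemma Baire_ball:
  fixes E :: "nat \<Rightarrow> 'a::complete_space set"
  assumes "\<And>n. closed (E n)" and "(\<Union>n. E n) = UNIV"
  obtains n c r where "r > 0" "ball c r \<subseteq> E n"
proof -
  have "euclidean interior_of \<Union>(range E) \<noteq> {}"
    using assms(2) by simp
  then obtain n where "interior (E n) \<noteq> {}"
    using Baire_category_alt[of euclidean "range E"] assms(1)
    by (auto simp: completely_metrizable_space_euclidean closed_closedin[symmetric])
  then show ?thesis
    using that by (auto simp: mem_interior)
qed

lemma uniform_boundedness:
  fixes F :: "'i \<Rightarrow> 'a::banach \<Rightarrow>\<^sub>L 'b::real_normed_vector"
  assumes "\<And>x. bounded ((\<lambda>i. F i x) ` S)"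
  obtains M where "M \<ge> 0" "\<And>i x. i \<in> S \<Longrightarrow> norm (F i x) \<le> M * norm x"
proof -
  define E where "E n = (\<Inter>i\<in>S. {x. norm (F i x) \<le> real n})" for n
  have "closed (E n)" for n
    unfolding E_def by (intro closed_INT ballI closed_Collect_le continuous_intros)
  moreover have "(\<Union>n. E n) = UNIV"
  proof (intro set_eqI iffI)
    fix x :: 'a
    obtain C where "\<And>i. i \<in> S \<Longrightarrow> norm (F i x) \<le> C"
      using assms[of x] by (auto simp: bounded_iff)
    moreover obtain n where "C \<le> real n" using real_arch_simple by blast
    ultimately have "x \<in> E n" by (force simp: E_def)
    then show "x \<in> (\<Union>n. E n)" by blast
  qed auto
  ultimately obtain n c r where r: "r > 0" "ball c r \<subseteq> E n"
    using Baire_ball by metis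
  have bound: "norm (F i y) \<le> real n" if "i \<in> S" "dist c y < r" for i y
    using r that by (auto simp: E_def)
  show ?thesis
  proof
    fix i x assume i: "i \<in> S"
    show "norm (F i x) \<le> 4 * real n / r * norm x"
    proof (cases "x = 0")
      case False
      define s where "s = r / 2 / norm x"
      have s: "s > 0" "dist c (c + s *\<^sub>R x) < r" using False r by (auto simp: s_def dist_norm)
      have "s * norm (F i x) = norm (F i (c + s *\<^sub>R x) - F i c)"
        using s by (simp add: blinfun.add_right blinfun.scaleR_right)
      also have "\<dots> \<le> 2 * real n"
        using bound[OF i s(2)] bound[OF i, of c] r norm_triangle_ineq4 by (smt (verit) dist_self)
      finally show ?thesis using s False r by (simp add: s_def field_simps)
    qed simp
  qed (use r in simp)
qed

lemma approximation_from_dense_sublevel: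
  fixes \<Lambda> :: "'a::real_normed_vector \<Rightarrow> 'b::real_normed_vector"
  assumes lin: "linear \<Lambda>" and ball: "ball c r \<subseteq> closure {a. norm (\<Lambda> a) \<le> m}"
    and x: "norm x < r * s" and s: "s > 0" and \<delta>: "\<delta> > 0"
  obtains d where "norm (\<Lambda> d) \<le> 2 * m * s" "norm (x - d) < \<delta>"
proof -
  have approx: "\<exists>d. norm (\<Lambda> d) \<le> m \<and> norm (y - d) < \<delta> / (2 * s)" if "y \<in> ball c r" for y
  proof -
    have "y \<in> closure {a. norm (\<Lambda> a) \<le> m}" using ball that by blast
    moreover have "\<delta> / (2 * s) > 0" using \<delta> s by simp
    ultimately obtain d where "norm (\<Lambda> d) \<le> m" "dist d y < \<delta> / (2 * s)"
      unfolding closure_approachable by blast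
    then show ?thesis by (auto simp: dist_norm norm_minus_commute)
  qed
  have "0 < r * s" using x by (meson norm_ge_zero le_less_trans)
  then have "r > 0" using s by (simp add: zero_less_mult_iff)
  then obtain d2 where d2: "norm (\<Lambda> d2) \<le> m" "norm (c - d2) < \<delta> / (2 * s)"
    using approx[of c] by auto
  have "c + x /\<^sub>R s \<in> ball c r" using x s by (simp add: dist_norm field_simps)
  then obtain d1 where d1: "norm (\<Lambda> d1) \<le> m" "norm (c + x /\<^sub>R s - d1) < \<delta> / (2 * s)"
    using approx by blast
  show ?thesis
  proof
    have "norm (\<Lambda> (s *\<^sub>R (d1 - d2))) \<le> s * (norm (\<Lambda> d1) + norm (\<Lambda> d2))"
      using s by (simp add: linear_scale[OF lin] linear_diff[OF lin] norm_triangle_ineq4)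
    also have "\<dots> \<le> s * (2 * m)"
      using d1 d2 s by (intro mult_left_mono) auto
    finally show "norm (\<Lambda> (s *\<^sub>R (d1 - d2))) \<le> 2 * m * s" by (simp add: mult_ac)
    have "x - s *\<^sub>R (d1 - d2) = s *\<^sub>R ((c + x /\<^sub>R s - d1) - (c - d2))"
      using s by (simp add: algebra_simps)
    then have "norm (x - s *\<^sub>R (d1 - d2)) = s * norm ((c + x /\<^sub>R s - d1) - (c - d2))"
      using s by (metis abs_of_pos norm_scaleR)
    also have "\<dots> \<le> s * (norm (c + x /\<^sub>R s - d1) + norm (c - d2))"
      using s by (intro mult_left_mono norm_triangle_ineq4) auto
    also have "\<dots> < s * (\<delta> / s)"
      using d1 d2 s by (intro mult_strict_left_mono) auto
    finally show "norm (x - s *\<^sub>R (d1 - d2)) < \<delta>" using s by simp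
  qed
qed

text \<open>The approximations are summed to a series converging to \<open>x\<close>; the injective bounded
  \<open>J\<close> identifies the limit of the images with \<open>\<Lambda> x\<close>.\<close>
lemma norm_le_if_geometric_approximation:
  fixes \<Lambda> :: "'a::real_normed_vector \<Rightarrow> 'x::banach" and J :: "'x \<Rightarrow> 'y::real_normed_vector"
  assumes lin: "linear \<Lambda>" and J: "bounded_linear J" "inj J" and JL: "bounded_linear (J \<circ> \<Lambda>)"
    and approx: "\<And>y s. norm y < r * s \<Longrightarrow> s > 0 \<Longrightarrow> \<exists>d. norm (\<Lambda> d) \<le> M * s \<and> norm (y - d) < r * s / 2"
    and x: "norm x < r"
  shows "norm (\<Lambda> x) \<le> 2 * M"
proof -
  have "\<forall>i y. \<exists>d. norm y < r * (1/2)^i \<longrightarrow> norm (\<Lambda> d) \<le> M * (1/2)^i \<and> norm (y - d) < r * (1/2)^Suc i"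
    using approx by fastforce
  then obtain nxt where nxt: "\<And>i y. norm y < r * (1/2)^i \<Longrightarrow>
      norm (\<Lambda> (nxt i y)) \<le> M * (1/2)^i \<and> norm (y - nxt i y) < r * (1/2)^Suc i"
    by metis
  define res where "res = rec_nat x (\<lambda>i y. y - nxt i y)"
  define d where "d i = nxt i (res i)" for i
  have res_Suc: "res (Suc i) = res i - d i" for i by (simp add: res_def d_def)
  have res_small: "norm (res i) < r * (1/2)^i" for i
    by (induction i) (use x nxt in \<open>auto simp: res_def\<close>)
  have d_small: "norm (\<Lambda> (d i)) \<le> M * (1/2)^i" for i
    using nxt res_small by (simp add: d_def)
  have partial: "(\<Sum>i<n. d i) = x - res n" for n
    by (induction n) (simp_all add: res_Suc, simp add: res_def)
  have "res \<longlonglongrightarrow> 0"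
    by (rule Lim_null_comparison[OF always_eventually, of _ "\<lambda>n. r * (1/2)^n"])
       (use res_small less_imp_le in \<open>auto intro!: tendsto_mult_right_zero LIMSEQ_power_zero\<close>)
  then have "(\<lambda>n. \<Sum>i<n. d i) \<longlonglongrightarrow> x"
    unfolding partial using tendsto_diff[OF tendsto_const, of res 0 _ x] by simp
  then have lim1: "(\<lambda>n. J (\<Lambda> (\<Sum>i<n. d i))) \<longlonglongrightarrow> J (\<Lambda> x)"
    using bounded_linear.tendsto[OF JL] by (simp add: o_def)
  have geom: "summable (\<lambda>i. M * (1/2::real)^i)"
    by (intro summable_mult summable_geometric) simp
  have summ: "summable (\<lambda>i. \<Lambda> (d i))"
    by (rule summable_comparison_test'[OF geom]) (use d_small in auto)
  have "(\<lambda>n. J (\<Lambda> (\<Sum>i<n. d i))) \<longlonglongrightarrow> J (\<Sum>i. \<Lambda> (d i))"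
    unfolding linear_sum[OF lin] using summable_LIMSEQ[OF summ] by (rule bounded_linear.tendsto[OF J(1)])
  with lim1 have "\<Lambda> x = (\<Sum>i. \<Lambda> (d i))"
    using J(2) LIMSEQ_unique by (metis injD)
  also have "norm \<dots> \<le> (\<Sum>i. M * (1/2)^i)"
    by (rule norm_suminf_le[OF d_small geom])
  also have "\<dots> = 2 * M"
    using suminf_mult[of "\<lambda>i. (1/2::real)^i" M] suminf_geometric[of "1/2::real"] by simp
  finally show ?thesis .
qed

text \<open>A closed graph theorem: the graph of \<open>\<Lambda>\<close> is closed since \<open>J \<circ> \<Lambda>\<close> is continuous and
  \<open>J\<close> is injective.\<close>
lemma bounded_linear_if_injective_comp:
  fixes \<Lambda> :: "'a::{real_normed_vector,complete_space} \<Rightarrow> 'x::banach" and J :: "'x \<Rightarrow> 'y::real_normed_vector"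
  assumes lin: "linear \<Lambda>" and J: "bounded_linear J" "inj J" and JL: "bounded_linear (J \<circ> \<Lambda>)"
  shows "bounded_linear \<Lambda>"
proof -
  define E where "E m = closure {a. norm (\<Lambda> a) \<le> real m}" for m :: nat
  have "(\<Union>m. E m) = UNIV"
  proof (intro set_eqI iffI)
    fix a :: 'a
    obtain m :: nat where "norm (\<Lambda> a) \<le> real m" using real_arch_simple by blast
    then have "a \<in> E m" unfolding E_def by (auto intro: closure_subset[THEN subsetD])
    then show "a \<in> (\<Union>m. E m)" by blast
  qed auto
  moreover have "closed (E m)" for m by (simp add: E_def)
  ultimately obtain m c r where r: "r > 0" "ball c r \<subseteq> E m"
    using Baire_ball by metis
  have small: "norm (\<Lambda> a) \<le> 4 * real m" if "norm a < r" for a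
  proof -
    have "\<exists>d. norm (\<Lambda> d) \<le> 2 * real m * s \<and> norm (y - d) < r * s / 2"
      if "norm y < r * s" "s > 0" for y s
    proof -
      have "r * s / 2 > 0" using r that by simp
      then show ?thesis
        using approximation_from_dense_sublevel[OF lin r(2)[unfolded E_def] that] by metis
    qed
    from norm_le_if_geometric_approximation[OF lin J JL this \<open>norm a < r\<close>] show ?thesis by simp
  qed
  have "norm (\<Lambda> a) \<le> norm a * (8 * real m / r)" for a
  proof (cases "a = 0")
    case False
    define s where "s = r / (2 * norm a)"
    have s: "s > 0" "norm (s *\<^sub>R a) < r" using r False by (auto simp: s_def)
    then have "s * norm (\<Lambda> a) \<le> 4 * real m"
      using small[OF s(2)] by (simp add: linear_scale[OF lin])
    then show ?thesis using s r False by (simp add: s_def field_simps)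
  qed (simp add: linear_0[OF lin])
  then show ?thesis
    using lin by (intro bounded_linear_intro[of _ "8 * real m / r"]) (auto simp: linear_add linear_scale)
qed

locale extrapolated_semigroup =
  fixes T :: "real \<Rightarrow> 'x::banach \<Rightarrow>\<^sub>L 'x" and D :: "'x set" and A :: "'x \<Rightarrow> 'x"
    and \<beta> :: real and R :: "'x \<Rightarrow>\<^sub>L 'x" and j :: "'x \<Rightarrow> 'y::banach"
    and T1 :: "real \<Rightarrow> 'y \<Rightarrow>\<^sub>L 'y"
  assumes semigroup: "c0_semigroup T" and generator: "is_generator T D A"
    and resolvent: "is_resolvent D A \<beta> R" and completion: "is_completion_wrt R j"
    and extension: "extends_semigroup T j T1"
begin

lemma T_zero: "T 0 x = x"
  using semigroup by (simp add: c0_semigroup_def)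

lemma T_add: "0 \<le> s \<Longrightarrow> 0 \<le> t \<Longrightarrow> T (s + t) x = T s (T t x)"
  using semigroup by (simp add: c0_semigroup_def)

lemma T_commute: "0 \<le> s \<Longrightarrow> 0 \<le> t \<Longrightarrow> T s (T t x) = T t (T s x)"
  using T_add[of s t x] T_add[of t s x] by (simp add: add.commute)

lemma continuous_on_T: "continuous_on {0..} (\<lambda>t. T t x)"
  using semigroup by (simp add: c0_semigroup_def)

lemma generator_tendsto:
  "x \<in> D \<longleftrightarrow> (\<exists>y. ((\<lambda>h. (T h x - x) /\<^sub>R h) \<longlongrightarrow> y) (at_right 0))"
  "x \<in> D \<Longrightarrow> ((\<lambda>h. (T h x - x) /\<^sub>R h) \<longlongrightarrow> A x) (at_right 0)"
  using generator by (auto simp: is_generator_def)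

lemma generator_zero: "A 0 = 0"
proof -
  have "0 \<in> D" using generator_tendsto(1)[of 0] by auto
  then show ?thesis using tendsto_unique[OF _ generator_tendsto(2), of 0] by simp
qed

lemma T_domain:
  assumes x: "x \<in> D" and t: "0 \<le> t"
  shows "T t x \<in> D" and "A (T t x) = T t (A x)"
proof -
  have "((\<lambda>h. T t ((T h x - x) /\<^sub>R h)) \<longlongrightarrow> T t (A x)) (at_right 0)"
    using generator_tendsto(2)[OF x] by (intro blinfun.tendsto) auto
  moreover have "T t ((T h x - x) /\<^sub>R h) = (T h (T t x) - T t x) /\<^sub>R h" if "0 < h" for h
    using T_commute[of h t x] t that by (simp add: blinfun.scaleR_right blinfun.diff_right)
  ultimately have lim: "((\<lambda>h. (T h (T t x) - T t x) /\<^sub>R h) \<longlongrightarrow> T t (A x)) (at_right 0)"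
    by (rule Lim_transform_eventually[OF _ eventually_at_rightI[of 0 1]]) auto
  then show "T t x \<in> D" using generator_tendsto(1) by blast
  from tendsto_unique[OF _ generator_tendsto(2)[OF this] lim] show "A (T t x) = T t (A x)" by simp
qed

lemma resolvent_commute: "0 \<le> t \<Longrightarrow> R (T t y) = T t (R y)"
  using resolvent T_domain[of "R y" t] unfolding is_resolvent_def
  by (metis blinfun.diff_right blinfun.scaleR_right)

lemma resolvent_eq_zero: "R y = 0 \<Longrightarrow> y = 0"
  using resolvent generator_zero unfolding is_resolvent_def by (metis diff_zero scaleR_zero_right)

lemma norm_j: "norm (j x) = norm (R x)"
  using completion by (simp add: is_completion_wrt_def)

lemma bounded_linear_j: "bounded_linear j"
proof -
  have "linear j" using completion by (simp add: is_completion_wrt_def)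
  moreover have "norm (j x) \<le> norm x * norm R" for x
    using norm_blinfun[of R x] by (simp add: norm_j mult.commute)
  ultimately show ?thesis
    by (auto intro!: bounded_linear_intro simp: linear_add linear_scale)
qed

sublocale j: bounded_linear j
  by (rule bounded_linear_j)

lemma inj_j: "inj j"
proof (rule injI)
  fix x y assume "j x = j y"
  then have "R (x - y) = 0" using norm_j[of "x - y"] by (simp add: j.diff)
  then show "x = y" using resolvent_eq_zero by fastforce
qed

lemma T_uniformly_bounded:
  obtains M where "M \<ge> 0" "\<And>t x. t \<in> {0..\<tau>} \<Longrightarrow> norm (T t x) \<le> M * norm x"
proof -
  have "bounded ((\<lambda>t. T t x) ` {0..\<tau>})" for x
    by (intro compact_imp_bounded compact_continuous_image continuous_on_subset[OF continuous_on_T]) auto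
  then show ?thesis using uniform_boundedness[where F=T and S="{0..\<tau>}"] that by blast
qed

lemma eq_on_range_j_imp_eq:
  fixes f g :: "'y \<Rightarrow> 'z::real_normed_vector"
  assumes "continuous_on UNIV f" "continuous_on UNIV g" "\<And>x. f (j x) = g (j x)"
  shows "f y = g y"
proof -
  have "closure (range j) \<subseteq> {y. f y = g y}"
    using assms by (intro closure_minimal closed_Collect_eq) auto
  then show ?thesis using completion by (auto simp: is_completion_wrt_def)
qed

lemma le_on_range_j_imp_le:
  fixes f g :: "'y \<Rightarrow> real"
  assumes "continuous_on UNIV f" "continuous_on UNIV g" "\<And>x. f (j x) \<le> g (j x)"
  shows "f y \<le> g y"
proof -
  have "closure (range j) \<subseteq> {y. f y \<le> g y}"
    using assms by (intro closure_minimal closed_Collect_le) auto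
  then show ?thesis using completion by (auto simp: is_completion_wrt_def)
qed

lemma T1_j: "0 \<le> t \<Longrightarrow> T1 t (j x) = j (T t x)"
  using extension by (simp add: extends_semigroup_def)

lemma T1_add: "0 \<le> s \<Longrightarrow> 0 \<le> t \<Longrightarrow> T1 (s + t) y = T1 s (T1 t y)"
  by (rule eq_on_range_j_imp_eq) (auto intro!: continuous_intros simp: T1_j T_add)

lemma T1_uniformly_bounded:
  obtains M where "M \<ge> 0" "\<And>t y. t \<in> {0..\<tau>} \<Longrightarrow> norm (T1 t y) \<le> M * norm y"
proof -
  obtain M where M: "M \<ge> 0" "\<And>t x. t \<in> {0..\<tau>} \<Longrightarrow> norm (T t x) \<le> M * norm x"
    using T_uniformly_bounded by blast
  have "norm (T1 t y) \<le> M * norm y" if t: "t \<in> {0..\<tau>}" for t y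
  proof (rule le_on_range_j_imp_le)
    fix x
    have "norm (T1 t (j x)) = norm (T t (R x))"
      using t by (simp add: T1_j norm_j resolvent_commute)
    also have "\<dots> \<le> M * norm (j x)" using M t by (simp add: norm_j)
    finally show "norm (T1 t (j x)) \<le> M * norm (j x)" .
  qed (auto intro!: continuous_intros)
  then show ?thesis using M(1) that by blast
qed

end

definition simple_on :: "real set \<Rightarrow> (real \<Rightarrow> 'a) \<Rightarrow> bool" where
  "simple_on S f \<longleftrightarrow> finite (f ` S) \<and> (\<forall>v. {s\<in>S. f s = v} \<in> sets lebesgue)"

lemma strongly_measurable_on_if_simple_limit:
  assumes "\<And>m. simple_on S (F m)" and "\<And>s. s \<in> S \<Longrightarrow> (\<lambda>m. F m s) \<longlonglongrightarrow> f s"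
  shows "strongly_measurable_on S f"
  unfolding strongly_measurable_on_def
  using assms by (intro exI[of _ F] conjI AE_I2) (auto simp: simple_on_def space_restrict_space)

lemma simple_on_subset: "simple_on S f \<Longrightarrow> S' \<subseteq> S \<Longrightarrow> S' \<in> sets lebesgue \<Longrightarrow> simple_on S' f"
proof -
  assume f: "simple_on S f" and S': "S' \<subseteq> S" "S' \<in> sets lebesgue"
  have "{s\<in>S'. f s = v} = S' \<inter> {s\<in>S. f s = v}" for v using S' by auto
  then show ?thesis
    using f S' by (auto simp: simple_on_def intro: finite_subset[of _ "f ` S"])
qed

lemma simple_on_comp: "simple_on S f \<Longrightarrow> simple_on S (\<lambda>s. g (f s))"
proof -
  assume f: "simple_on S f"
  have "{s\<in>S. g (f s) = v} = (\<Union>b\<in>{b\<in>f ` S. g b = v}. {s\<in>S. f s = b})" for v by auto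
  then show ?thesis
    using f by (auto simp: simple_on_def image_image[symmetric] intro!: sets.finite_UN)
qed

lemma simple_on_add:
  fixes f g :: "real \<Rightarrow> 'a::ab_group_add"
  assumes f: "simple_on S f" and g: "simple_on S g"
  shows "simple_on S (\<lambda>s. f s + g s)"
  unfolding simple_on_def
proof
  have "(\<lambda>s. f s + g s) ` S \<subseteq> (\<lambda>(a, b). a + b) ` (f ` S \<times> g ` S)" by auto
  moreover have "finite ((\<lambda>(a, b). a + b) ` (f ` S \<times> g ` S))"
    using f g by (simp add: simple_on_def)
  ultimately show "finite ((\<lambda>s. f s + g s) ` S)"
    by (rule finite_subset)
  show "\<forall>v. {s\<in>S. f s + g s = v} \<in> sets lebesgue"
  proof
    fix v
    have "(\<Union>a\<in>f ` S. {s\<in>S. f s = a} \<inter> {s\<in>S. g s = v - a}) \<in> sets lebesgue"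
      using f g by (intro sets.finite_UN) (auto simp: simple_on_def)
    moreover have "{s\<in>S. f s + g s = v} = (\<Union>a\<in>f ` S. {s\<in>S. f s = a} \<inter> {s\<in>S. g s = v - a})"
      by (auto simp: algebra_simps)
    ultimately show "{s\<in>S. f s + g s = v} \<in> sets lebesgue" by simp
  qed
qed

lemma simple_on_sum:
  fixes f :: "nat \<Rightarrow> real \<Rightarrow> 'a::ab_group_add"
  shows "(\<And>n. n \<in> N \<Longrightarrow> simple_on S (f n)) \<Longrightarrow> S \<in> sets lebesgue \<Longrightarrow> simple_on S (\<lambda>s. \<Sum>n\<in>N. f n s)"
proof (induction N rule: infinite_finite_induct)
  case (infinite N)
  then show ?case by (simp add: simple_on_def image_constant_conv)
next
  case empty
  then show ?case by (simp add: simple_on_def image_constant_conv)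
next
  case (insert n N)
  then show ?case by (simp add: simple_on_add)
qed

lemma simple_on_zero_outside:
  assumes f: "simple_on (S \<inter> I) f" and S: "S \<in> sets lebesgue" and I: "I \<in> sets lebesgue"
  shows "simple_on S (\<lambda>s. if s \<in> I then f s else 0)"
proof -
  have "(\<lambda>s. if s \<in> I then f s else 0) ` S \<subseteq> insert 0 (f ` (S \<inter> I))" by auto
  moreover have "{s\<in>S. (if s \<in> I then f s else 0) = v} =
      {s\<in>S \<inter> I. f s = v} \<union> (if v = 0 then S - I else {})" for v
    by auto
  ultimately show ?thesis
    using f S I by (auto simp: simple_on_def intro: finite_subset)
qed

lemma lebesgue_sets_reflect:
  assumes "A \<in> sets lebesgue" shows "(\<lambda>r::real. c - r) -` A \<in> sets lebesgue"
proof -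
  have "(\<lambda>x::real. c + (\<Sum>j\<in>Basis. ((-1) * (x \<bullet> j)) *\<^sub>R j)) \<in> lebesgue \<rightarrow>\<^sub>M lebesgue"
    by (rule lebesgue_affine_measurable) auto
  then have "(\<lambda>x::real. c - x) \<in> lebesgue \<rightarrow>\<^sub>M lebesgue" by simp
  from measurable_sets[OF this assms] show ?thesis by simp
qed

lemma simple_on_reflect:
  assumes f: "simple_on K f" and S: "S \<in> sets lebesgue" and maps: "\<And>s. s \<in> S \<Longrightarrow> c - s \<in> K"
  shows "simple_on S (\<lambda>s. f (c - s))"
proof -
  have "(\<lambda>s. f (c - s)) ` S \<subseteq> f ` K" using maps by auto
  moreover have "{s\<in>S. f (c - s) = v} \<in> sets lebesgue" for v
  proof -
    have eq: "{s\<in>S. f (c - s) = v} = S \<inter> (\<lambda>s. c - s) -` {k\<in>K. f k = v}"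
      using maps by auto
    have "{k\<in>K. f k = v} \<in> sets lebesgue" using f by (simp add: simple_on_def)
    then show ?thesis unfolding eq by (rule sets.Int[OF S lebesgue_sets_reflect])
  qed
  ultimately show ?thesis
    using f by (auto simp: simple_on_def intro: finite_subset)
qed

definition glue :: "(nat \<Rightarrow> real set) \<Rightarrow> (nat \<Rightarrow> real \<Rightarrow> 'a::zero) \<Rightarrow> real \<Rightarrow> 'a" where
  "glue I f r = (if \<exists>n. r \<in> I n then f (SOME n. r \<in> I n) r else 0)"

lemma glue_eq:
  assumes "disjoint_family I" "r \<in> I n" shows "glue I f r = f n r"
proof -
  have "(SOME n. r \<in> I n) = n"
    using assms by (intro some_equality) (auto simp: disjoint_family_on_def)
  then show ?thesis using assms(2) by (auto simp: glue_def)
qed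

lemma glue_outside: "(\<And>n. r \<notin> I n) \<Longrightarrow> glue I f r = 0"
  by (simp add: glue_def)

lemma glue_add:
  fixes f g :: "nat \<Rightarrow> real \<Rightarrow> 'a::monoid_add"
  shows "glue I (\<lambda>n r. f n r + g n r) r = glue I f r + glue I g r"
  by (simp add: glue_def)

lemma glue_scaleR:
  fixes f :: "nat \<Rightarrow> real \<Rightarrow> 'a::real_vector"
  shows "glue I (\<lambda>n r. a *\<^sub>R f n r) r = a *\<^sub>R glue I f r"
  by (simp add: glue_def)

lemma strongly_measurable_on_glue:
  fixes f :: "nat \<Rightarrow> real \<Rightarrow> 'a::real_normed_vector"
  assumes disj: "disjoint_family I" and I: "\<And>n. I n \<in> sets lebesgue" and S: "S \<in> sets lebesgue"
    and approx: "\<And>n. \<exists>F. (\<forall>m. simple_on (S \<inter> I n) (F m)) \<and> (\<forall>s\<in>S \<inter> I n. (\<lambda>m. F m s) \<longlonglongrightarrow> f n s)"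
  shows "strongly_measurable_on S (glue I f)"
proof -
  have "\<exists>F. \<forall>n. (\<forall>m. simple_on (S \<inter> I n) (F n m)) \<and> (\<forall>s\<in>S \<inter> I n. (\<lambda>m. F n m s) \<longlonglongrightarrow> f n s)"
    using approx by (rule choice[OF allI])
  then obtain F where F: "\<And>n m. simple_on (S \<inter> I n) (F n m)"
    "\<And>n s. s \<in> S \<inter> I n \<Longrightarrow> (\<lambda>m. F n m s) \<longlonglongrightarrow> f n s"
    by blast
  define G where "G m s = (\<Sum>n<m. if s \<in> I n then F n m s else 0)" for m s
  show ?thesis
  proof (rule strongly_measurable_on_if_simple_limit)
    show "simple_on S (G m)" for m
      unfolding G_def using F(1) S I by (intro simple_on_sum simple_on_zero_outside) auto
    fix s assume s: "s \<in> S"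
    show "(\<lambda>m. G m s) \<longlonglongrightarrow> glue I f s"
    proof (cases "\<exists>n. s \<in> I n")
      case True
      then obtain n where n: "s \<in> I n" by blast
      have "G m s = (if n < m then F n m s else 0)" for m
      proof -
        have "(if s \<in> I i then F i m s else 0) = (if i = n then F n m s else 0)" for i
          using disj n by (auto simp: disjoint_family_on_def)
        then show ?thesis by (simp add: G_def)
      qed
      then have "\<forall>\<^sub>F m in sequentially. G m s = F n m s"
        by (auto intro: eventually_sequentiallyI[of "Suc n"])
      moreover have "(\<lambda>m. F n m s) \<longlonglongrightarrow> glue I f s"
        using F(2)[of s n] s n glue_eq[OF disj n, of f] by simp
      ultimately show ?thesis by (simp add: tendsto_cong)
    next
      case False
      then show ?thesis by (simp add: G_def glue_outside)
    qed
  qed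
qed

subsection \<open>Everywhere representatives of bounded inputs\<close>

definition everywhere_Linf_on :: "real \<Rightarrow> (real \<Rightarrow> 'a::real_normed_vector) \<Rightarrow> bool" where
  "everywhere_Linf_on K w \<longleftrightarrow> (\<exists>C. \<forall>s\<in>{0..K}. norm (w s) \<le> C) \<and>
     (\<exists>F. (\<forall>m. simple_on {0..K} (F m)) \<and> (\<forall>s\<in>{0..K}. (\<lambda>m. F m s) \<longlonglongrightarrow> w s))"

lemma Linf_on_representation:
  assumes "Linf_on t u"
  shows "\<exists>F C N. N \<in> null_sets lebesgue \<and> (\<forall>m. simple_on {0..t} (F m)) \<and>
    (\<forall>s\<in>{0..t} - N. (\<lambda>m. F m s) \<longlonglongrightarrow> u s \<and> norm (u s) \<le> C)"
proof -
  obtain F :: "nat \<Rightarrow> real \<Rightarrow> _" and C where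
    F: "\<And>m. simple_on {0..t} (F m)"
    and lim: "AE s in lebesgue_on {0..t}. (\<lambda>m. F m s) \<longlonglongrightarrow> u s"
    and bound: "AE s in lebesgue_on {0..t}. norm (u s) \<le> C"
    using assms by (auto simp: Linf_on_def strongly_measurable_on_def simple_on_def)
  from lim bound have "AE s in lebesgue_on {0..t}. (\<lambda>m. F m s) \<longlonglongrightarrow> u s \<and> norm (u s) \<le> C"
    by eventually_elim auto
  then have "AE s in lebesgue. s \<in> {0..t} \<longrightarrow> (\<lambda>m. F m s) \<longlonglongrightarrow> u s \<and> norm (u s) \<le> C"
    by (subst (asm) AE_restrict_space_iff) auto
  then obtain N where
    "\<And>s. s \<in> space lebesgue - N \<Longrightarrow> s \<in> {0..t} \<longrightarrow> (\<lambda>m. F m s) \<longlonglongrightarrow> u s \<and> norm (u s) \<le> C"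
    "N \<in> null_sets lebesgue"
    by (erule AE_E3)
  then show ?thesis using F by (intro exI[of _ F] exI[of _ C] exI[of _ N]) auto
qed

lemma Linf_loc_everywhere_representative:
  assumes "\<And>t. t > 0 \<Longrightarrow> Linf_on t u"
  obtains w N where "N \<in> null_sets lebesgue" "\<And>s. s \<notin> N \<Longrightarrow> w s = u s" "\<And>K. everywhere_Linf_on K w"
proof -
  define P where "P k F C N \<longleftrightarrow> N \<in> null_sets lebesgue \<and> (\<forall>m. simple_on {0..real k + 1} (F m)) \<and>
      (\<forall>s\<in>{0..real k + 1} - N. (\<lambda>m. F m s) \<longlonglongrightarrow> u s \<and> norm (u s) \<le> C)"
    for k :: nat and F :: "nat \<Rightarrow> real \<Rightarrow> _" and C N
  have "\<forall>k. \<exists>F C N. P k F C N"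
    unfolding P_def using assms by (intro allI Linf_on_representation) auto
  from choice[OF this] obtain F where "\<forall>k. \<exists>C N. P k (F k) C N" ..
  from choice[OF this] obtain C where "\<forall>k. \<exists>N. P k (F k) (C k) N" ..
  from choice[OF this] obtain N where P: "\<And>k. P k (F k) (C k) (N k)" by blast
  define NN where "NN = (\<Union>k. N k)"
  have NN: "NN \<in> null_sets lebesgue" using P by (auto simp: NN_def P_def)
  define w where "w s = (if s \<in> NN then 0 else u s)" for s
  have everywhere: "everywhere_Linf_on K w" for K
  proof -
    obtain k :: nat where "K \<le> real k" using real_arch_simple by blast
    then have sub: "{0..K} \<subseteq> {0..real k + 1}" by auto
    have good: "(\<lambda>m. F k m s) \<longlonglongrightarrow> u s \<and> norm (u s) \<le> C k" if "s \<in> {0..K}" "s \<notin> NN" for s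
    proof -
      have "s \<in> {0..real k + 1} - N k" using that sub by (auto simp: NN_def)
      then show ?thesis using P[of k] unfolding P_def by blast
    qed
    define G where "G m s = (if s \<in> - NN then F k m s else 0)" for m s
    have "\<forall>s\<in>{0..K}. norm (w s) \<le> max (C k) 0"
      using good by (simp add: w_def max.coboundedI1)
    moreover have "simple_on {0..K} (G m)" for m
    proof -
      have NN_sets: "- NN \<in> sets lebesgue" using NN sets.compl_sets[of NN lebesgue] by (auto simp: Compl_eq_Diff_UNIV)
      have "simple_on {0..real k + 1} (F k m)" using P[of k] by (simp add: P_def)
      then have "simple_on ({0..K} \<inter> - NN) (F k m)"
        by (rule simple_on_subset) (use sub in blast, rule sets.Int[OF _ NN_sets], simp)
      from simple_on_zero_outside[OF this _ NN_sets] show ?thesis unfolding G_def by simp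
    qed
    moreover have "\<forall>s\<in>{0..K}. (\<lambda>m. G m s) \<longlonglongrightarrow> w s"
    proof
      fix s assume s: "s \<in> {0..K}"
      show "(\<lambda>m. G m s) \<longlonglongrightarrow> w s"
        by (cases "s \<in> NN") (use good[OF s] in \<open>simp_all add: G_def w_def\<close>)
    qed
    ultimately show ?thesis
      unfolding everywhere_Linf_on_def by (intro conjI exI[of _ G] exI[of _ "max (C k) 0"]) auto
  qed
  show ?thesis by (rule that[OF NN _ everywhere]) (simp add: w_def)
qed

lemma everywhere_Linf_on_reflect:
  assumes w: "everywhere_Linf_on t w" and a: "0 \<le> a" "a \<le> t"
  shows "Linf_on a (\<lambda>s. w (t - s))"
proof -
  obtain C F where C: "\<And>s. s \<in> {0..t} \<Longrightarrow> norm (w s) \<le> C"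
    and F: "\<And>m. simple_on {0..t} (F m)" "\<And>s. s \<in> {0..t} \<Longrightarrow> (\<lambda>m. F m s) \<longlonglongrightarrow> w s"
    using w unfolding everywhere_Linf_on_def by blast
  have "strongly_measurable_on {0..a} (\<lambda>s. w (t - s))"
  proof (rule strongly_measurable_on_if_simple_limit)
    show "simple_on {0..a} (\<lambda>s. F m (t - s))" for m
      by (rule simple_on_reflect[OF F(1)]) (use a in auto)
    show "(\<lambda>m. F m (t - s)) \<longlonglongrightarrow> w (t - s)" if "s \<in> {0..a}" for s
      using F(2) a that by simp
  qed
  moreover have "AE s in lebesgue_on {0..a}. norm (w (t - s)) \<le> C"
    using a C by (intro AE_I2) (auto simp: space_restrict_space)
  ultimately show ?thesis unfolding Linf_on_def by blast
qed

locale bounded_input = extrapolated_semigroup T D A \<beta> R j T1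
  for T :: "real \<Rightarrow> 'x::banach \<Rightarrow>\<^sub>L 'x" and D A \<beta> R and j :: "'x \<Rightarrow> 'y::banach" and T1 +
  fixes B :: "'u::banach \<Rightarrow>\<^sub>L 'y" and \<Phi> :: "real \<Rightarrow> real" and w :: "real \<Rightarrow> 'u"
  assumes young: "young_function \<Phi>" and EPhi_admissible: "admissible (EPhi_on \<Phi>) T1 B j"
    and input: "\<And>K. everywhere_Linf_on K w"
begin

lemma Linf_admissible: "admissible Linf_on T1 B j"
  using admissible_mono[OF Linf_on_imp_EPhi_on[OF young] EPhi_admissible] .

lemma input_bounded:
  obtains C where "C \<ge> 0" "\<forall>s\<in>{0..K}. norm (w s) \<le> C"
proof -
  obtain C where "\<forall>s\<in>{0..K}. norm (w s) \<le> C" using input[of K] by (auto simp: everywhere_Linf_on_def)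
  then show ?thesis using that[of "max C 0"] by (simp add: max.coboundedI1)
qed

text \<open>\<open>conv p t\<close> is the element of \<open>X\<close> representing \<open>\<integral>\<^sub>p\<^sup>t T\<^sub>-\<^sub>1(t - s) B w(s) ds\<close>,
  written in the variable \<open>\<rho> = t - s\<close>.\<close>
definition conv :: "real \<Rightarrow> real \<Rightarrow> 'x" where
  "conv p t = (SOME z. ((\<lambda>\<rho>. T1 \<rho> (B (w (t - \<rho>)))) has_integral j z) {0..t - p})"

lemma has_integral_conv:
  assumes "0 \<le> p" "p \<le> t"
  shows "((\<lambda>\<rho>. T1 \<rho> (B (w (t - \<rho>)))) has_integral j (conv p t)) {0..t - p}"
proof -
  have "\<exists>z. ((\<lambda>\<rho>. T1 \<rho> (B (w (t - \<rho>)))) has_integral j z) {0..t - p}"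
  proof (cases "p = t")
    case True
    then show ?thesis
      by (intro exI[of _ 0]) (simp add: j.zero has_integral_refl)
  next
    case False
    then have "Linf_on (t - p) (\<lambda>\<rho>. w (t - \<rho>))"
      using assms by (intro everywhere_Linf_on_reflect[OF input]) auto
    then show ?thesis using Linf_admissible False assms unfolding admissible_def by simp
  qed
  then show ?thesis unfolding conv_def by (rule someI_ex)
qed

lemma conv_split:
  assumes p: "0 \<le> p" "p \<le> t"
  shows "conv 0 t = conv p t + T (t - p) (conv 0 p)"
proof -
  define f where "f \<rho> = T1 \<rho> (B (w (t - \<rho>)))" for \<rho>
  have whole: "(f has_integral j (conv 0 t)) {0..t}"
    using has_integral_conv[of 0 t] p unfolding f_def by simp
  have "f integrable_on {t - p..t}"
    by (rule integrable_subinterval_real[OF has_integral_integrable[OF whole]]) (use p in auto)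
  then obtain I where I: "(f has_integral I) {t - p..t}" by blast
  have part: "(f has_integral j (conv p t)) {0..t - p}"
    using has_integral_conv[OF p] unfolding f_def .
  have "(f has_integral (j (conv p t) + I)) {0..t}"
    using p by (intro has_integral_combine[OF _ _ part I]) auto
  then have "j (conv 0 t) = j (conv p t) + I"
    using whole by (rule has_integral_unique[rotated])
  moreover have "I = j (T (t - p) (conv 0 p))"
  proof -
    have shifted: "((\<lambda>\<sigma>. f (\<sigma> + (t - p))) has_integral I) {0..p}"
      using has_integral_shift_real_ivl[OF I, of "t - p"] by simp
    have "((\<lambda>\<sigma>. T1 (t - p) (T1 \<sigma> (B (w (p - \<sigma>))))) has_integral T1 (t - p) (j (conv 0 p))) {0..p}"
      using has_integral_linear[OF has_integral_conv[of 0 p] blinfun.bounded_linear_right] p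
      by (simp add: o_def)
    then have "((\<lambda>\<sigma>. f (\<sigma> + (t - p))) has_integral T1 (t - p) (j (conv 0 p))) {0..p}"
      by (rule has_integral_eq[rotated]) (use p in \<open>simp add: f_def T1_add[symmetric] add.commute\<close>)
    then show ?thesis
      using has_integral_unique[OF shifted] p by (simp add: T1_j)
  qed
  ultimately have "j (conv 0 t) = j (conv p t + T (t - p) (conv 0 p))" by (simp add: j.add)
  then show ?thesis by (rule injD[OF inj_j])
qed

lemma has_integral_conv_zero:
  assumes "0 \<le> t"
  shows "((\<lambda>s. T1 (t - s) (B (w s))) has_integral j (conv 0 t)) {0..t}"
proof -
  have "((\<lambda>\<rho>. T1 \<rho> (B (w (t - \<rho>)))) has_integral j (conv 0 t)) {0..t}"
    using has_integral_conv[of 0 t] assms by simp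
  then have "((\<lambda>x. T1 (- x) (B (w (t - - x)))) has_integral j (conv 0 t)) {-t..-0}"
    by (rule has_integral_reflect_real[THEN iffD2])
  from has_integral_shift_real_ivl[OF this, of "- t"] show ?thesis by simp
qed

end

subsection \<open>Gluing pieces of the input\<close>

text \<open>The \<open>n\<close>-th piece \<open>\<rho> \<mapsto> w (hi n - \<rho>)\<close>, \<open>0 \<le> \<rho> \<le> hi n - lo n\<close>, of the reflected
  input is moved to the interval \<open>I n\<close> starting at \<open>\<theta> n\<close>.  The intervals are disjoint subsets
  of \<open>[0, 1/2]\<close>, and they are so short that the glued input lies in \<open>E\<^sub>\<Phi>\<close> whenever the
  coefficient of the \<open>n\<close>-th piece is \<open>O(n)\<close>.\<close>
locale separated_pieces = bounded_input T D A \<beta> R j T1 B \<Phi> w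
  for T :: "real \<Rightarrow> 'x::banach \<Rightarrow>\<^sub>L 'x" and D A \<beta> R and j :: "'x \<Rightarrow> 'y::banach" and T1
    and B :: "'u::banach \<Rightarrow>\<^sub>L 'y" and \<Phi> w +
  fixes \<theta> lo hi :: "nat \<Rightarrow> real" and \<tau> :: real
  assumes theta_pos: "\<And>n. \<theta> n > 0" and theta_0: "\<theta> 0 \<le> 1/4" and theta_Suc: "\<And>n. \<theta> (Suc n) \<le> \<theta> n / 4"
    and pieces: "\<And>n. 0 \<le> lo n \<and> lo n \<le> hi n \<and> hi n \<le> \<tau>"
    and length_0: "hi 0 - lo 0 \<le> 1/4" and length_Suc: "\<And>n. hi (Suc n) - lo (Suc n) \<le> \<theta> n / 4"
    and length_small: "\<And>n. (hi n - lo n) * (1 + real n + \<Phi> (real n * real n)) \<le> (1/2)^Suc n"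
begin

definition "len n = hi n - lo n"
definition "I n = {\<theta> n..\<theta> n + len n}"
definition "q n = hi n + \<theta> n"
definition "glued k = glue I (\<lambda>n r. k n *\<^sub>R w (q n - r))"

lemma len_nonneg: "0 \<le> len n"
  using pieces[of n] by (simp add: len_def)

lemma theta_antimono: "m \<le> n \<Longrightarrow> \<theta> n \<le> \<theta> m"
proof (induction n rule: dec_induct)
  case (step n)
  then show ?case using theta_Suc[of n] theta_pos[of n] by simp
qed simp

lemma I_end_le: "\<theta> n + len n \<le> (if n = 0 then 1/2 else \<theta> (n - 1) / 2)"
proof (cases n)
  case (Suc m)
  then show ?thesis using theta_Suc[of m] length_Suc[of m] by (simp add: len_def)
qed (use theta_0 length_0 in \<open>simp add: len_def\<close>)

lemma I_subset: "I n \<subseteq> {0..1}"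
proof -
  have "\<theta> n + len n \<le> 1/2"
    using I_end_le[of n] theta_antimono[of 0 "n - 1"] theta_0 by (simp split: if_splits)
  then show ?thesis using theta_pos[of n] len_nonneg[of n] by (auto simp: I_def)
qed

lemma disjoint_I: "disjoint_family I"
proof -
  have less: "I m \<inter> I n = {}" if "m < n" for m n
  proof -
    have "\<theta> (n - 1) \<le> \<theta> m" using that by (intro theta_antimono) simp
    then have "\<theta> n + len n < \<theta> m" using I_end_le[of n] that theta_pos[of m] by simp
    then show ?thesis by (auto simp: I_def)
  qed
  show ?thesis unfolding disjoint_family_on_def
  proof (intro ballI impI)
    fix m n :: nat assume "m \<noteq> n"
    then show "I m \<inter> I n = {}" using less[of m n] less[of n m] by (cases "m < n") auto
  qed
qed

lemma reflect_I: "r \<in> I n \<Longrightarrow> q n - r \<in> {0..\<tau>}"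
  using pieces[of n] by (auto simp: I_def q_def len_def)

lemma glued_eq: "r \<in> I n \<Longrightarrow> glued k r = k n *\<^sub>R w (q n - r)"
  unfolding glued_def by (rule glue_eq[OF disjoint_I])

lemma glued_outside: "(\<And>n. r \<notin> I n) \<Longrightarrow> glued k r = 0"
  unfolding glued_def by (rule glue_outside)

lemma glued_add: "glued (\<lambda>n. k n + k' n) r = glued k r + glued k' r"
  unfolding glued_def using glue_add[of I "\<lambda>n r. k n *\<^sub>R w (q n - r)"] by (simp add: scaleR_add_left)

lemma glued_scaleR: "glued (\<lambda>n. a * k n) r = a *\<^sub>R glued k r"
  unfolding glued_def using glue_scaleR[of I a "\<lambda>n r. k n *\<^sub>R w (q n - r)"] by simp

lemma norm_glued_le:
  assumes C: "\<forall>s\<in>{0..\<tau>}. norm (w s) \<le> C" and r: "r \<in> I n"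
  shows "norm (glued k r) \<le> \<bar>k n\<bar> * C"
  using C reflect_I[OF r] by (simp add: glued_eq[OF r] mult_left_mono)

lemma strongly_measurable_on_glued: "strongly_measurable_on {0..1} (glued k)"
  unfolding glued_def
proof (rule strongly_measurable_on_glue[OF disjoint_I])
  fix n
  obtain F where F: "\<And>m. simple_on {0..\<tau>} (F m)" "\<And>s. s \<in> {0..\<tau>} \<Longrightarrow> (\<lambda>m. F m s) \<longlonglongrightarrow> w s"
    using input[of \<tau>] unfolding everywhere_Linf_on_def by blast
  have "simple_on ({0..1} \<inter> I n) (\<lambda>r. F m (q n - r))" for m
    by (rule simple_on_reflect[OF F(1)]) (simp add: I_def, blast intro: reflect_I)
  then have "simple_on ({0..1} \<inter> I n) (\<lambda>r. k n *\<^sub>R F m (q n - r))" for m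
    by (rule simple_on_comp)
  moreover have "(\<lambda>m. k n *\<^sub>R F m (q n - r)) \<longlonglongrightarrow> k n *\<^sub>R w (q n - r)" if "r \<in> I n" for r
    using F(2)[OF reflect_I[OF that]] by (intro tendsto_scaleR tendsto_const)
  ultimately show "\<exists>F. (\<forall>m. simple_on ({0..1} \<inter> I n) (F m)) \<and>
      (\<forall>s\<in>{0..1} \<inter> I n. (\<lambda>m. F m s) \<longlonglongrightarrow> k n *\<^sub>R w (q n - s))"
    by (intro exI[of _ "\<lambda>m r. k n *\<^sub>R F m (q n - r)"]) simp
qed (auto simp: I_def)

lemma sets_I: "I n \<in> sets (lebesgue_on {0..1})"
  using I_subset[of n] by (subst sets_restrict_space_iff) (auto simp: I_def)

lemma emeasure_I: "emeasure (lebesgue_on {0..1}) (I n) = ennreal (len n)"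
  using I_subset[of n] len_nonneg[of n] by (subst emeasure_restrict_space) (auto simp: I_def)

lemma Phi_norm_glued_le:
  assumes \<kappa>: "\<kappa> > 0" and C: "\<forall>s\<in>{0..\<tau>}. norm (w s) \<le> C"
    and k: "\<And>n. \<bar>k n\<bar> * C \<le> \<kappa> * (real n * real n)"
  shows "ennreal (\<Phi> (norm (glued k s) / \<kappa>)) \<le> (\<Sum>n. ennreal (\<Phi> (real n * real n)) * indicator (I n) s)"
    (is "_ \<le> (\<Sum>n. ?g n)")
proof (cases "\<exists>n. s \<in> I n")
  case True
  then obtain n where n: "s \<in> I n" by blast
  have "s \<notin> I m" if "m \<noteq> n" for m
    using disjoint_I n that by (auto simp: disjoint_family_on_def)
  then have "?g m = (if m = n then ennreal (\<Phi> (real n * real n)) else 0)" for m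
    using n by simp
  then have sum: "(\<Sum>m. ?g m) = ennreal (\<Phi> (real n * real n))"
    using sums_unique[OF sums_single[of n "\<lambda>_. ennreal (\<Phi> (real n * real n))"]] by simp
  have "norm (glued k s) \<le> \<kappa> * (real n * real n)"
    using norm_glued_le[OF C n, of k] k[of n] by linarith
  then have "norm (glued k s) / \<kappa> \<le> real n * real n" using \<kappa> by (simp add: field_simps)
  then show ?thesis
    unfolding sum using \<kappa> by (intro ennreal_leI young_function_mono[OF young]) auto
next
  case False
  then show ?thesis by (simp add: glued_outside young_function_zero[OF young])
qed

lemma mem_luxemburg_set_glued:
  assumes \<kappa>: "\<kappa> > 0" and C: "\<forall>s\<in>{0..\<tau>}. norm (w s) \<le> C"
    and k: "\<And>n. \<bar>k n\<bar> * C \<le> \<kappa> * (real n * real n)"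
  shows "\<kappa> \<in> luxemburg_set \<Phi> 1 (glued k)"
proof -
  define g where "g n s = ennreal (\<Phi> (real n * real n)) * indicator (I n) s" for n s
  have "(\<integral>\<^sup>+ s. ennreal (\<Phi> (norm (glued k s) / \<kappa>)) \<partial>lebesgue_on {0..1})
      \<le> (\<integral>\<^sup>+ s. (\<Sum>n. g n s) \<partial>lebesgue_on {0..1})"
    unfolding g_def by (rule nn_integral_mono) (rule Phi_norm_glued_le[OF \<kappa> C k])
  also have "\<dots> = (\<Sum>n. \<integral>\<^sup>+ s. g n s \<partial>lebesgue_on {0..1})"
  proof (rule nn_integral_suminf)
    show "g n \<in> borel_measurable (lebesgue_on {0..1})" for n
      unfolding g_def using sets_I[of n] by measurable
  qed
  also have "\<dots> = (\<Sum>n. ennreal (\<Phi> (real n * real n) * len n))"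
    by (simp add: g_def nn_integral_cmult_indicator[OF sets_I] emeasure_I ennreal_mult'
        len_nonneg young_function_nonneg[OF young])
  also have "\<dots> \<le> (\<Sum>n. ennreal ((1/2)^Suc n))"
  proof (intro suminf_le ennreal_leI summableI)
    fix n
    have "\<Phi> (real n * real n) * len n \<le> (1 + real n + \<Phi> (real n * real n)) * len n"
      using len_nonneg[of n] by (intro mult_right_mono) auto
    also have "\<dots> \<le> (1/2)^Suc n" using length_small[of n] by (simp add: len_def mult.commute)
    finally show "\<Phi> (real n * real n) * len n \<le> (1/2)^Suc n" .
  qed
  also have "\<dots> = ennreal 1"
    by (rule suminf_ennreal_eq[OF _ power_half_series]) simp
  finally show ?thesis using \<kappa> by (simp add: luxemburg_set_def)
qed

lemma Linf_on_glued_finite: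
  assumes "\<And>n. n \<ge> N \<Longrightarrow> k n = 0"
  shows "Linf_on 1 (glued k)"
proof -
  obtain C where C0: "C \<ge> 0" and C: "\<forall>s\<in>{0..\<tau>}. norm (w s) \<le> C"
    by (rule input_bounded)
  have "norm (glued k s) \<le> (\<Sum>i<N. \<bar>k i\<bar>) * C" for s
  proof (cases "\<exists>n. s \<in> I n")
    case True
    then obtain n where n: "s \<in> I n" by blast
    have "\<bar>k n\<bar> \<le> (\<Sum>i<N. \<bar>k i\<bar>)"
      using assms[of n] by (cases "n < N") (auto intro: member_le_sum sum_nonneg)
    then show ?thesis using norm_glued_le[OF C n, of k] C0 mult_right_mono by fastforce
  qed (use C0 in \<open>simp add: glued_outside sum_nonneg\<close>)
  then show ?thesis using strongly_measurable_on_glued by (auto simp: Linf_on_def)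
qed

lemma mem_luxemburg_set_glued_tail:
  assumes k: "\<And>n. \<bar>k n\<bar> \<le> Bd * real n" and tail: "\<And>n. n < N \<Longrightarrow> k n = 0"
    and C: "\<forall>s\<in>{0..\<tau>}. norm (w s) \<le> C" "C \<ge> 0" and \<kappa>: "\<kappa> > 0" "Bd * C \<le> \<kappa> * real N"
  shows "\<kappa> \<in> luxemburg_set \<Phi> 1 (glued k)"
proof (rule mem_luxemburg_set_glued[OF \<kappa>(1) C(1)])
  fix n
  show "\<bar>k n\<bar> * C \<le> \<kappa> * (real n * real n)"
  proof (cases "n < N")
    case False
    have "\<bar>k n\<bar> * C \<le> Bd * C * real n"
      using mult_right_mono[OF k[of n] C(2)] by (simp add: mult_ac)
    also have "\<dots> \<le> \<kappa> * real N * real n"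
      using \<kappa>(2) by (rule mult_right_mono) simp
    also have "\<dots> \<le> \<kappa> * (real n * real n)"
      using False \<kappa>(1) by (simp add: mult_right_mono)
    finally show ?thesis .
  qed (use tail \<kappa> in simp)
qed

text \<open>Truncating the coefficients after \<open>N\<close> leaves a bounded input, and the tail has
  coefficients of order \<open>n \<le> n\<^sup>2 / N\<close>, hence small Luxemburg norm.\<close>
lemma EPhi_on_glued:
  assumes k: "\<And>n. \<bar>k n\<bar> \<le> Bd * real n"
  shows "EPhi_on \<Phi> 1 (glued k)"
proof -
  obtain C where C: "\<forall>s\<in>{0..\<tau>}. norm (w s) \<le> C" "C \<ge> 0"
    by (rule input_bounded)
  have Bd: "Bd \<ge> 0" using k[of 1] by linarith
  then have "Bd * C + 1 \<in> luxemburg_set \<Phi> 1 (glued k)"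
    using k[of 0] C by (intro mem_luxemburg_set_glued_tail[OF k _ C, of 1]) (auto simp: add_nonneg_pos)
  then have L: "LPhi_on \<Phi> 1 (glued k)"
    using strongly_measurable_on_glued by (auto simp: LPhi_on_def)
  have "\<exists>v. Linf_on 1 v \<and> LPhi_on \<Phi> 1 (\<lambda>s. glued k s - v s) \<and> luxemburg_norm \<Phi> 1 (\<lambda>s. glued k s - v s) < \<epsilon>"
    if \<epsilon>: "\<epsilon> > 0" for \<epsilon>
  proof -
    obtain N :: nat where N: "Bd * C / (\<epsilon> / 2) \<le> real N" using real_arch_simple by blast
    define head where "head n = (if n < N then k n else 0)" for n
    define tail where "tail n = (if n < N then 0 else k n)" for n
    have "(\<lambda>s. glued k s - glued head s) = glued tail"
    proof -
      have "(\<lambda>n. head n + tail n) = k" by (simp add: head_def tail_def fun_eq_iff)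
      then show ?thesis using glued_add[of head tail] by (auto simp: fun_eq_iff algebra_simps)
    qed
    moreover have "\<epsilon>/2 \<in> luxemburg_set \<Phi> 1 (glued tail)"
      using k N \<epsilon> Bd by (intro mem_luxemburg_set_glued_tail[OF _ _ C, of _ Bd N])
        (auto simp: tail_def field_simps)
    then have "LPhi_on \<Phi> 1 (glued tail) \<and> luxemburg_norm \<Phi> 1 (glued tail) < \<epsilon>"
      using strongly_measurable_on_glued luxemburg_norm_le[of "\<epsilon>/2"] \<epsilon> by (fastforce simp: LPhi_on_def)
    moreover have "Linf_on 1 (glued head)"
      by (rule Linf_on_glued_finite[of N]) (simp add: head_def)
    ultimately show ?thesis by (intro exI[of _ "glued head"]) simp
  qed
  with L show ?thesis unfolding EPhi_on_def by blast
qed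

lemma has_integral_indicator_I: "((\<lambda>r. if r \<in> I n then c else 0) has_integral (len n * c)) {0..1}"
proof -
  have "((\<lambda>r. c) has_integral (len n * c)) (cbox (\<theta> n) (\<theta> n + len n))"
    using has_integral_const_real[of c "\<theta> n" "\<theta> n + len n"] len_nonneg[of n] by simp
  from has_integral_restrict_closed_subinterval[OF this] I_subset[of n]
  show ?thesis by (simp add: I_def)
qed

definition "weight = glue I (\<lambda>n r. real n)"

lemma weight_eq: "r \<in> I n \<Longrightarrow> weight r = real n"
  unfolding weight_def by (rule glue_eq[OF disjoint_I])

lemma weight_integrable: "weight integrable_on {0..1}"
proof -
  define f where "f m r = (\<Sum>n<m. if r \<in> I n then real n else 0)" for m r
  have f_int: "(f m has_integral (\<Sum>n<m. len n * real n)) {0..1}" for m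
    unfolding f_def by (intro has_integral_sum has_integral_indicator_I) auto
  have le_1: "integral {0..1} (f m) \<le> 1" for m
  proof -
    have "(\<Sum>n<m. len n * real n) \<le> (\<Sum>n<m. (1/2)^Suc n)"
    proof (rule sum_mono)
      fix n
      have "len n * real n \<le> len n * (1 + real n + \<Phi> (real n * real n))"
        using len_nonneg[of n] young_function_nonneg[OF young, of "real n * real n"]
        by (intro mult_left_mono) auto
      then show "len n * real n \<le> (1/2)^Suc n" using length_small[of n] by (simp add: len_def)
    qed
    also have "\<dots> \<le> 1"
      using sum_le_suminf[of "\<lambda>n. (1/2::real)^Suc n" "{..<m}"] power_half_series
      by (auto simp: sums_iff)
    finally show ?thesis using integral_unique[OF f_int] by simp
  qed
  have ge_0: "integral {0..1} (f m) \<ge> 0" for m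
    using integral_unique[OF f_int] len_nonneg by (simp add: sum_nonneg)
  have lim: "(\<lambda>m. f m r) \<longlonglongrightarrow> weight r" for r
  proof (cases "\<exists>n. r \<in> I n")
    case True
    then obtain n where n: "r \<in> I n" by blast
    have "(if r \<in> I i then real i else 0) = (if i = n then real n else 0)" for i
      using disjoint_I n by (auto simp: disjoint_family_on_def)
    then have "f m r = (if n < m then real n else 0)" for m
      by (simp add: f_def)
    then have "\<forall>\<^sub>F m in sequentially. f m r = weight r"
      using weight_eq[OF n] by (intro eventually_sequentiallyI[of "Suc n"]) simp
    then show ?thesis by (rule tendsto_eventually)
  next
    case False
    then show ?thesis by (simp add: f_def weight_def glue_outside)
  qed
  have "weight integrable_on {0..1} \<and> (\<lambda>m. integral {0..1} (f m)) \<longlonglongrightarrow> integral {0..1} weight"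
  proof (rule monotone_convergence_increasing)
    show "f m integrable_on {0..1}" for m using f_int by blast
    show "f m r \<le> f (Suc m) r" for m r by (simp add: f_def)
    show "bounded (range (\<lambda>m. integral {0..1} (f m)))"
      unfolding bounded_iff using le_1 ge_0 by (intro exI[of _ 1]) auto
  qed (rule lim)
  then show ?thesis ..
qed

lemma norm_glued_le_weight:
  assumes C: "\<forall>s\<in>{0..\<tau>}. norm (w s) \<le> C" "C \<ge> 0" and k: "\<And>n. \<bar>k n\<bar> \<le> Bd * real n"
  shows "norm (glued k r) \<le> Bd * C * weight r"
proof (cases "\<exists>n. r \<in> I n")
  case True
  then obtain n where n: "r \<in> I n" by blast
  have "norm (glued k r) \<le> \<bar>k n\<bar> * C" by (rule norm_glued_le[OF C(1) n])
  also have "\<dots> \<le> Bd * real n * C" by (rule mult_right_mono[OF k C(2)])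
  finally show ?thesis using weight_eq[OF n] by (simp add: mult_ac)
next
  case False
  then show ?thesis using k[of 1] C by (simp add: glued_outside weight_def glue_outside)
qed

text \<open>The coefficients of the pieces are sampled at the naturals from a bounded continuous
  function \<open>c\<close> on the reals, which serves as a Banach space of bounded sequences; the \<open>n\<close>-th
  piece is scaled by \<open>c n * n\<close>.\<close>
definition coeff :: "(real \<Rightarrow>\<^sub>C real) \<Rightarrow> nat \<Rightarrow> real" where
  "coeff c n = apply_bcontfun c n * real n"

lemma abs_coeff_le: "\<bar>coeff c n\<bar> \<le> norm c * real n"
  using norm_bounded[of c "real n"] by (simp add: coeff_def abs_mult mult_right_mono)

definition response :: "(real \<Rightarrow>\<^sub>C real) \<Rightarrow> 'x" where
  "response c = (SOME x. ((\<lambda>r. T1 r (B (glued (coeff c) r))) has_integral j x) {0..1})"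

lemma has_integral_response:
  "((\<lambda>r. T1 r (B (glued (coeff c) r))) has_integral j (response c)) {0..1}"
proof -
  have "\<exists>x. ((\<lambda>r. T1 r (B (glued (coeff c) r))) has_integral j x) {0..1}"
    using EPhi_admissible EPhi_on_glued[OF abs_coeff_le] unfolding admissible_def by simp
  then show ?thesis unfolding response_def by (rule someI_ex)
qed

lemma response_eqI:
  "((\<lambda>r. T1 r (B (glued (coeff c) r))) has_integral j x) {0..1} \<Longrightarrow> response c = x"
  using has_integral_unique[OF has_integral_response] injD[OF inj_j] by metis

lemma linear_response: "linear response"
proof
  fix a b :: "real \<Rightarrow>\<^sub>C real" and r :: real
  have "coeff (a + b) = (\<lambda>n. coeff a n + coeff b n)"
    by (simp add: coeff_def fun_eq_iff distrib_right)
  then show "response (a + b) = response a + response b"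
    using has_integral_add[OF has_integral_response[of a] has_integral_response[of b]]
    by (intro response_eqI) (simp add: glued_add blinfun.add_right j.add)
  have "coeff (r *\<^sub>R a) = (\<lambda>n. r * coeff a n)"
    by (simp add: coeff_def fun_eq_iff)
  then show "response (r *\<^sub>R a) = r *\<^sub>R response a"
    using has_integral_cmul[OF has_integral_response[of a], of r]
    by (intro response_eqI) (simp add: glued_scaleR blinfun.scaleR_right j.scaleR)
qed

lemma bounded_linear_j_response: "bounded_linear (j \<circ> response)"
proof -
  obtain M where M: "M \<ge> 0" "\<And>t y. t \<in> {0..1} \<Longrightarrow> norm (T1 t y) \<le> M * norm y"
    using T1_uniformly_bounded by blast
  obtain C where C: "C \<ge> 0" "\<forall>s\<in>{0..\<tau>}. norm (w s) \<le> C"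
    by (rule input_bounded)
  define K where "K = M * norm B * C * integral {0..1} weight"
  have "norm (j (response c)) \<le> norm c * K" for c
  proof -
    have bound: "norm (T1 r (B (glued (coeff c) r))) \<le> (M * norm B * norm c * C) * weight r"
      if r: "r \<in> {0..1}" for r
    proof -
      have "norm (T1 r (B (glued (coeff c) r))) \<le> M * (norm B * norm (glued (coeff c) r))"
        using M(2)[OF r] norm_blinfun[of B] M(1) by (meson mult_left_mono order_trans)
      also have "\<dots> \<le> M * (norm B * (norm c * C * weight r))"
        using M(1) norm_glued_le_weight[OF C(2,1) abs_coeff_le] by (intro mult_left_mono) auto
      finally show ?thesis by (simp add: mult_ac)
    qed
    have "norm (integral {0..1} (\<lambda>r. T1 r (B (glued (coeff c) r))))
        \<le> integral {0..1} (\<lambda>r. (M * norm B * norm c * C) * weight r)"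
      using has_integral_response integrable_on_cmult_left[OF weight_integrable] bound
      by (intro integral_norm_bound_integral) auto
    then show ?thesis
      using integral_unique[OF has_integral_response] by (simp add: K_def mult_ac)
  qed
  moreover have "linear (j \<circ> response)"
    using linear_compose[OF linear_response j.linear] .
  ultimately show ?thesis
    by (intro bounded_linear_intro[of _ K])
      (auto simp: linear_add[OF linear_response] linear_scale[OF linear_response] j.add j.scaleR)
qed

definition delta :: "nat \<Rightarrow> real \<Rightarrow>\<^sub>C real" where
  "delta n = Bcontfun (\<lambda>x. max 0 (1 - \<bar>x - real n\<bar>))"

lemma apply_delta: "apply_bcontfun (delta n) x = max 0 (1 - \<bar>x - real n\<bar>)"
proof -
  have "(\<lambda>x. max 0 (1 - \<bar>x - real n\<bar>)) \<in> bcontfun"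
    by (rule bcontfun_normI[of _ 1]) (auto intro!: continuous_intros)
  then show ?thesis by (simp add: delta_def Bcontfun_inverse)
qed

lemma apply_delta_nat: "apply_bcontfun (delta n) (real m) = (if m = n then 1 else 0)"
proof (cases "m = n")
  case False
  then have "1 \<le> \<bar>real m - real n\<bar>" by (cases "m < n") auto
  then show ?thesis using False by (simp add: apply_delta)
qed (simp add: apply_delta)

lemma norm_delta_le: "norm (delta n) \<le> 1"
  by (rule norm_bound) (simp add: apply_delta)

lemma response_delta: "response (delta n) = real n *\<^sub>R T (\<theta> n) (conv (lo n) (hi n))"
proof (rule response_eqI)
  define f where "f r = real n *\<^sub>R T1 r (B (w (q n - r)))" for r
  have "((\<lambda>\<sigma>. T1 \<sigma> (B (w (hi n - \<sigma>)))) has_integral j (conv (lo n) (hi n))) {0..len n}"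
    using has_integral_conv[of "lo n" "hi n"] pieces[of n] by (simp add: len_def)
  from has_integral_cmul[OF has_integral_linear[OF this blinfun.bounded_linear_right[of "T1 (\<theta> n)"]], of "real n"]
  have "((\<lambda>\<sigma>. f (\<sigma> + \<theta> n)) has_integral real n *\<^sub>R T1 (\<theta> n) (j (conv (lo n) (hi n)))) {0..len n}"
  proof (rule has_integral_eq[rotated])
    fix \<sigma> assume "\<sigma> \<in> {0..len n}"
    then show "(real n *\<^sub>R (T1 (\<theta> n) \<circ> (\<lambda>\<sigma>. T1 \<sigma> (B (w (hi n - \<sigma>))))) \<sigma>) = f (\<sigma> + \<theta> n)"
      using T1_add[of "\<theta> n" \<sigma>] theta_pos[of n] by (simp add: f_def q_def add.commute)
  qed
  then have "(f has_integral real n *\<^sub>R T1 (\<theta> n) (j (conv (lo n) (hi n)))) (cbox (\<theta> n) (\<theta> n + len n))"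
    using has_integral_shift_real_ivl_iff[of f _ "\<theta> n" "\<theta> n + len n" "\<theta> n"] by simp
  from has_integral_restrict_closed_subinterval[OF this] I_subset[of n]
  have "((\<lambda>r. if r \<in> I n then f r else 0) has_integral j (real n *\<^sub>R T (\<theta> n) (conv (lo n) (hi n)))) {0..1}"
    using theta_pos[of n] by (simp add: I_def T1_j j.scaleR)
  moreover have "T1 r (B (glued (coeff (delta n)) r)) = (if r \<in> I n then f r else 0)" for r
  proof (cases "\<exists>m. r \<in> I m")
    case True
    then obtain m where m: "r \<in> I m" by blast
    then have "r \<in> I n \<longleftrightarrow> m = n" using disjoint_I by (auto simp: disjoint_family_on_def)
    then show ?thesis
      using glued_eq[OF m] by (simp add: f_def coeff_def apply_delta_nat blinfun.scaleR_right)
  qed (simp add: glued_outside)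
  ultimately show "((\<lambda>r. T1 r (B (glued (coeff (delta n)) r))) has_integral
      j (real n *\<^sub>R T (\<theta> n) (conv (lo n) (hi n)))) {0..1}"
    by simp
qed

text \<open>The response map is bounded by the closed graph theorem, while \<open>delta n\<close>, whose samples
  form the \<open>n\<close>-th unit sequence, has a response of norm \<open>n \<parallel>T(\<theta> n) conv (lo n) (hi n)\<parallel>\<close>.\<close>
lemma pieces_decay:
  obtains K where "\<And>n. real n * norm (T (\<theta> n) (conv (lo n) (hi n))) \<le> K"
proof -
  have "bounded_linear response"
    by (rule bounded_linear_if_injective_comp[OF linear_response bounded_linear_j inj_j
          bounded_linear_j_response])
  then obtain K where K: "\<And>c. norm (response c) \<le> norm c * K"
    using bounded_linear.bounded by blast
  have "real n * norm (T (\<theta> n) (conv (lo n) (hi n))) \<le> max K 0" for n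
  proof -
    have "real n * norm (T (\<theta> n) (conv (lo n) (hi n))) = norm (response (delta n))"
      by (simp add: response_delta)
    also have "\<dots> \<le> norm (delta n) * K" by (rule K)
    also have "\<dots> \<le> norm (delta n) * max K 0"
      by (intro mult_left_mono) auto
    also have "\<dots> \<le> max K 0"
      using mult_right_mono[OF norm_delta_le[of n], of "max K 0"] by simp
    finally show ?thesis .
  qed
  then show ?thesis by (rule that)
qed

end

subsection \<open>Continuity of the mild solution\<close>

context bounded_input
begin

lemma far_piece:
  assumes far: "\<And>\<eta>. \<eta> > 0 \<Longrightarrow> \<exists>p t. 0 \<le> p \<and> p \<le> t \<and> t \<le> \<tau> \<and> t - p \<le> \<eta> \<and> \<epsilon> < norm (conv p t)"
    and \<epsilon>: "\<epsilon> > 0" and \<delta>: "\<delta> > 0"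
  obtains p t \<theta> where "0 \<le> p" "p \<le> t" "t \<le> \<tau>" "t - p \<le> \<delta>" "\<epsilon> < norm (conv p t)"
    "0 < \<theta>" "\<theta> \<le> \<delta>" "norm (T \<theta> (conv p t) - conv p t) \<le> \<epsilon> / 2"
proof -
  obtain p t where pt: "0 \<le> p" "p \<le> t" "t \<le> \<tau>" "t - p \<le> \<delta>" "\<epsilon> < norm (conv p t)"
    using far[OF \<delta>] by blast
  have "((\<lambda>h. T h (conv p t)) \<longlongrightarrow> T 0 (conv p t)) (at 0 within {0..})"
    using continuous_on_T[of "conv p t"] by (simp add: continuous_on_def)
  then have "((\<lambda>h. T h (conv p t)) \<longlongrightarrow> conv p t) (at_right 0)"
    unfolding T_zero by (rule tendsto_within_subset) auto
  then have "\<forall>\<^sub>F h in at_right 0. dist (T h (conv p t)) (conv p t) < \<epsilon> / 2"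
    using \<epsilon> by (intro tendstoD) auto
  then obtain b where b: "b > 0" "\<And>h. 0 < h \<Longrightarrow> h < b \<Longrightarrow> dist (T h (conv p t)) (conv p t) < \<epsilon> / 2"
    by (auto simp: eventually_at_right_field)
  define \<theta> where "\<theta> = min \<delta> (b / 2)"
  have "0 < \<theta>" "\<theta> \<le> \<delta>" "\<theta> < b" using b \<delta> by (auto simp: \<theta>_def)
  then show ?thesis
    using that[OF pt, of \<theta>] b(2)[of \<theta>] by (simp add: dist_norm)
qed

lemma far_piece_sequence:
  assumes far: "\<And>\<eta>. \<eta> > 0 \<Longrightarrow> \<exists>p t. 0 \<le> p \<and> p \<le> t \<and> t \<le> \<tau> \<and> t - p \<le> \<eta> \<and> \<epsilon> < norm (conv p t)"
    and \<epsilon>: "\<epsilon> > 0" and \<sigma>: "\<And>n. \<sigma> n > 0"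
  obtains lo hi \<theta> where "\<And>n. 0 \<le> lo n \<and> lo n \<le> hi n \<and> hi n \<le> \<tau>" "\<And>n. hi n - lo n \<le> \<sigma> n"
    "hi 0 - lo 0 \<le> 1/4" "\<theta> 0 \<le> 1/4" "\<And>n. 0 < \<theta> n"
    "\<And>n. \<theta> (Suc n) \<le> \<theta> n / 4" "\<And>n. hi (Suc n) - lo (Suc n) \<le> \<theta> n / 4"
    "\<And>n. \<epsilon> < norm (conv (lo n) (hi n))"
    "\<And>n. norm (T (\<theta> n) (conv (lo n) (hi n)) - conv (lo n) (hi n)) \<le> \<epsilon> / 2"
proof -
  define P where "P n x \<longleftrightarrow> (case x of (p, t, \<theta>) \<Rightarrow> 0 \<le> p \<and> p \<le> t \<and> t \<le> \<tau> \<and>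
      t - p \<le> min (\<sigma> n) (1/4) \<and> \<epsilon> < norm (conv p t) \<and> 0 < \<theta> \<and> \<theta> \<le> 1/4 \<and>
      norm (T \<theta> (conv p t) - conv p t) \<le> \<epsilon> / 2)" for n and x :: "real \<times> real \<times> real"
  define Q where "Q x y \<longleftrightarrow> (case (x, y) of ((_, _, \<theta>), (p, t, \<theta>')) \<Rightarrow> t - p \<le> \<theta> / 4 \<and> \<theta>' \<le> \<theta> / 4)"
    for x y :: "real \<times> real \<times> real"
  have next_piece: "\<exists>x. P n x \<and> (case x of (p, t, \<theta>') \<Rightarrow> t - p \<le> \<delta> \<and> \<theta>' \<le> \<delta>)"
    if "\<delta> > 0" for n \<delta>
  proof -
    have pos: "0 < min \<delta> (min (\<sigma> n) (1/4))" using that \<sigma>[of n] by simp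
    obtain p t \<theta> where "0 \<le> p" "p \<le> t" "t \<le> \<tau>" "t - p \<le> min \<delta> (min (\<sigma> n) (1/4))"
      "\<epsilon> < norm (conv p t)" "0 < \<theta>" "\<theta> \<le> min \<delta> (min (\<sigma> n) (1/4))"
      "norm (T \<theta> (conv p t) - conv p t) \<le> \<epsilon> / 2"
      by (rule far_piece[OF far \<epsilon> pos])
    then show ?thesis unfolding P_def by (intro exI[of _ "(p, t, \<theta>)"]) simp
  qed
  obtain f where f: "\<And>n. P n (f n) \<and> Q (f n) (f (Suc n))"
  proof -
    have "\<exists>x. P 0 x" using next_piece[where \<delta>=1 and n=0] by auto
    moreover have "\<exists>y. P (Suc n) y \<and> Q x y" if "P n x" for n x
      using that next_piece[where \<delta>="snd (snd x) / 4" and n="Suc n"]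
      by (auto simp: P_def Q_def split: prod.splits)
    ultimately show ?thesis using dependent_nat_choice[of P "\<lambda>n. Q"] that by blast
  qed
  define lo hi \<theta> where "lo n = fst (f n)" and "hi n = fst (snd (f n))" and "\<theta> n = snd (snd (f n))" for n
  have "P n (lo n, hi n, \<theta> n)" and "Q (lo n, hi n, \<theta> n) (lo (Suc n), hi (Suc n), \<theta> (Suc n))" for n
    using f[of n] by (simp_all add: lo_def hi_def \<theta>_def)
  then show ?thesis by (intro that[of lo hi \<theta>]) (auto simp: P_def Q_def)
qed

text \<open>Large short pieces, with shifts \<open>\<theta> n\<close> so small that \<open>T(\<theta> n)\<close> keeps them large, could
  be chosen as in \<^locale>\<open>separated_pieces\<close>, contradicting their decay.\<close>
lemma short_large_conv_impossible:
  assumes far: "\<And>\<eta>. \<eta> > 0 \<Longrightarrow> \<exists>p t. 0 \<le> p \<and> p \<le> t \<and> t \<le> \<tau> \<and> t - p \<le> \<eta> \<and> \<epsilon> < norm (conv p t)"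
    and \<epsilon>: "\<epsilon> > 0"
  shows False
proof -
  define \<sigma> where "\<sigma> n = (1/2)^Suc n / (1 + real n + \<Phi> (real n * real n))" for n :: nat
  have denom_pos: "0 < 1 + real n + \<Phi> (real n * real n)" for n
    using young_function_nonneg[OF young, of "real n * real n"] by simp
  have \<sigma>_pos: "\<sigma> n > 0" for n using denom_pos[of n] by (simp add: \<sigma>_def)
  obtain lo hi \<theta> where pieces: "\<And>n. 0 \<le> lo n \<and> lo n \<le> hi n \<and> hi n \<le> \<tau>"
    and short: "\<And>n. hi n - lo n \<le> \<sigma> n" and "hi 0 - lo 0 \<le> 1/4" "\<theta> 0 \<le> 1/4" "\<And>n. 0 < \<theta> n"
    "\<And>n. \<theta> (Suc n) \<le> \<theta> n / 4" "\<And>n. hi (Suc n) - lo (Suc n) \<le> \<theta> n / 4"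
    and large: "\<And>n. \<epsilon> < norm (conv (lo n) (hi n))"
    and near: "\<And>n. norm (T (\<theta> n) (conv (lo n) (hi n)) - conv (lo n) (hi n)) \<le> \<epsilon> / 2"
    using far_piece_sequence[where \<sigma>=\<sigma>, OF far \<epsilon> \<sigma>_pos] by blast
  interpret separated_pieces T D A \<beta> R j T1 B \<Phi> w \<theta> lo hi \<tau>
  proof unfold_locales
    fix n
    have "(hi n - lo n) * (1 + real n + \<Phi> (real n * real n))
        \<le> \<sigma> n * (1 + real n + \<Phi> (real n * real n))"
      using short[of n] denom_pos[of n] by (intro mult_right_mono) auto
    also have "\<dots> = (1/2)^Suc n"
      using denom_pos[of n] unfolding \<sigma>_def by (simp del: power_Suc)
    finally show "(hi n - lo n) * (1 + real n + \<Phi> (real n * real n)) \<le> (1/2)^Suc n" .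
  qed fact+
  obtain K where K: "\<And>n. real n * norm (T (\<theta> n) (conv (lo n) (hi n))) \<le> K"
    using pieces_decay by blast
  obtain n :: nat where n: "2 * K / \<epsilon> < real n" using reals_Archimedean2 by blast
  have "\<epsilon> / 2 \<le> norm (T (\<theta> n) (conv (lo n) (hi n)))"
    using large[of n] near[of n] norm_triangle_ineq2[of "conv (lo n) (hi n)" "T (\<theta> n) (conv (lo n) (hi n))"]
    by (simp add: norm_minus_commute)
  then have "real n * (\<epsilon> / 2) \<le> K"
    using K[of n] by (meson mult_left_mono of_nat_0_le_iff order_trans)
  with n \<epsilon> show False by (simp add: field_simps)
qed

lemma conv_small:
  assumes "\<epsilon> > 0"
  obtains \<eta> where "\<eta> > 0" "\<And>p t. 0 \<le> p \<Longrightarrow> p \<le> t \<Longrightarrow> t \<le> \<tau> \<Longrightarrow> t - p \<le> \<eta> \<Longrightarrow> norm (conv p t) \<le> \<epsilon>"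
  using short_large_conv_impossible[OF _ assms] by (meson not_le)

lemma continuous_on_conv: "continuous_on {0..} (conv 0)"
  unfolding continuous_on_iff
proof (intro ballI allI impI)
  fix t0 \<epsilon> :: real
  assume t0: "t0 \<in> {0..}" and \<epsilon>: "\<epsilon> > 0"
  obtain \<eta> where \<eta>: "\<eta> > 0"
    "\<And>p t. 0 \<le> p \<Longrightarrow> p \<le> t \<Longrightarrow> t \<le> t0 + 1 \<Longrightarrow> t - p \<le> \<eta> \<Longrightarrow> norm (conv p t) \<le> \<epsilon> / 3"
    using conv_small[of "\<epsilon> / 3" "t0 + 1"] \<epsilon> by auto
  define \<delta>0 where "\<delta>0 = min (\<eta> / 2) (1/2)"
  define p where "p = max 0 (t0 - \<delta>0)"
  have \<delta>0: "\<delta>0 > 0" "2 * \<delta>0 \<le> \<eta>" "\<delta>0 \<le> 1/2" using \<eta> by (auto simp: \<delta>0_def)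
  have p: "0 \<le> p" "p \<le> t0" "t0 - p \<le> \<delta>0" using t0 \<delta>0 by (auto simp: p_def)
  define y where "y = conv 0 p"
  have "\<forall>e>0. \<exists>d>0. \<forall>h\<in>{0..}. dist h (t0 - p) < d \<longrightarrow> dist (T h y) (T (t0 - p) y) < e"
    using continuous_on_T[of y] p unfolding continuous_on_iff by simp
  moreover have "\<epsilon> / 3 > 0" using \<epsilon> by simp
  ultimately have "\<exists>\<delta>1>0. \<forall>h\<in>{0..}. dist h (t0 - p) < \<delta>1 \<longrightarrow> dist (T h y) (T (t0 - p) y) < \<epsilon> / 3"
    by blast
  then obtain \<delta>1 where \<delta>1: "\<delta>1 > 0"
    "\<And>h. 0 \<le> h \<Longrightarrow> dist h (t0 - p) < \<delta>1 \<Longrightarrow> norm (T h y - T (t0 - p) y) < \<epsilon> / 3"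
    by (auto simp: dist_norm)
  show "\<exists>\<delta>>0. \<forall>t\<in>{0..}. dist t t0 < \<delta> \<longrightarrow> dist (conv 0 t) (conv 0 t0) < \<epsilon>"
  proof (intro exI[of _ "min \<delta>0 \<delta>1"] conjI ballI impI)
    show "0 < min \<delta>0 \<delta>1" using \<delta>0 \<delta>1 by simp
    fix t assume t: "t \<in> {0..}" "dist t t0 < min \<delta>0 \<delta>1"
    then have tp: "p \<le> t" "t \<le> t0 + 1" "t - p \<le> \<eta>"
      using p \<delta>0 by (auto simp: p_def dist_real_def)
    have "conv 0 t - conv 0 t0 = conv p t - conv p t0 + (T (t - p) y - T (t0 - p) y)"
      using conv_split[OF p(1) tp(1)] conv_split[OF p(1,2)] by (simp add: y_def)
    also have "norm \<dots> \<le> norm (conv p t) + norm (conv p t0) + norm (T (t - p) y - T (t0 - p) y)"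
      by (smt (verit) norm_triangle_ineq norm_triangle_ineq4)
    also have "\<dots> < \<epsilon> / 3 + \<epsilon> / 3 + \<epsilon> / 3"
      using \<eta>(2)[OF p(1) tp] \<eta>(2)[OF p(1,2)] p \<delta>0 \<delta>1(2)[of "t - p"] tp t
      by (intro add_le_less_mono add_mono) (auto simp: dist_real_def)
    finally show "dist (conv 0 t) (conv 0 t0) < \<epsilon>" by (simp add: dist_norm)
  qed
qed


lemma mild_solution:
  assumes N: "N \<in> null_sets lebesgue" and w_u: "\<And>s. s \<notin> N \<Longrightarrow> w s = u s"
  shows "continuous_on {0..} (\<lambda>t. T t x0 + conv 0 t)"
    and "0 \<le> t \<Longrightarrow> ((\<lambda>s. T1 (t - s) (B (u s))) has_integral (j (T t x0 + conv 0 t) - T1 t (j x0))) {0..t}"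
proof -
  show "continuous_on {0..} (\<lambda>t. T t x0 + conv 0 t)"
    by (intro continuous_on_add continuous_on_T continuous_on_conv)
  assume t: "0 \<le> t"
  have "((\<lambda>s. T1 (t - s) (B (u s))) has_integral j (conv 0 t)) {0..t}"
  proof (rule has_integral_spike[OF _ _ has_integral_conv_zero[OF t]])
    show "negligible N" using N by (simp add: negligible_iff_null_sets)
    show "T1 (t - s) (B (u s)) = T1 (t - s) (B (w s))" if "s \<in> {0..t} - N" for s
      using w_u[of s] that by simp
  qed
  then show "((\<lambda>s. T1 (t - s) (B (u s))) has_integral (j (T t x0 + conv 0 t) - T1 t (j x0))) {0..t}"
    using t by (simp add: j.add T1_j)
qed

end

theorem proposition5:
  fixes T :: "real \<Rightarrow> 'x::banach \<Rightarrow>\<^sub>L 'x"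
    and D :: "'x set" and A :: "'x \<Rightarrow> 'x"
    and \<beta> :: real and R :: "'x \<Rightarrow>\<^sub>L 'x"
    and j :: "'x \<Rightarrow> 'y::banach"
    and T1 :: "real \<Rightarrow> 'y \<Rightarrow>\<^sub>L 'y"
    and B :: "'u::banach \<Rightarrow>\<^sub>L 'y"
    and \<Phi> :: "real \<Rightarrow> real"
  assumes "c0_semigroup T"
    and "is_generator T D A"
    and "is_resolvent D A \<beta> R"
    and "is_completion_wrt R j"
    and "extends_semigroup T j T1"
    and "young_function \<Phi>"
    and "admissible (EPhi_on \<Phi>) T1 B j"
  shows "admissible Linf_on T1 B j \<and>
    (\<forall>(u :: real \<Rightarrow> 'u) x0. (\<forall>t>0. Linf_on t u) \<longrightarrow>
       (\<exists>x :: real \<Rightarrow> 'x. continuous_on {0..} x \<and>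
          (\<forall>t\<ge>0. ((\<lambda>s. blinfun_apply (T1 (t - s)) (blinfun_apply B (u s)))
                     has_integral (j (x t) - blinfun_apply (T1 t) (j x0))) {0..t})))"
proof (intro conjI allI impI)
  show "admissible Linf_on T1 B j"
    using admissible_mono[OF Linf_on_imp_EPhi_on[OF assms(6)] assms(7)] .
next
  fix u :: "real \<Rightarrow> 'u" and x0 :: 'x
  assume "\<forall>t>0. Linf_on t u"
  then obtain w N where N: "N \<in> null_sets lebesgue" and w_u: "\<And>s. s \<notin> N \<Longrightarrow> w s = u s"
    and w: "\<And>K. everywhere_Linf_on K w"
    using Linf_loc_everywhere_representative[of u] by metis
  interpret bounded_input T D A \<beta> R j T1 B \<Phi> w
    by (intro bounded_input.intro extrapolated_semigroup.intro bounded_input_axioms.intro assms w)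
  show "\<exists>x. continuous_on {0..} x \<and>
      (\<forall>t\<ge>0. ((\<lambda>s. T1 (t - s) (B (u s))) has_integral (j (x t) - T1 t (j x0))) {0..t})"
    using mild_solution[OF N w_u] by blast
qed

end
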